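(* Let $\mathcal E$ be an exchangeability system for a noncommutative probability space $(\mathcal A,\phi)$ whose family of copies $(\mathcal A_k)_{k\in\mathbb N}$ satisfies pyramidal independence. Let $X_1,\dots,X_n\in\mathcal A$ and let $\pi\in\Pi_n$ have connected components $\pi',\pi'',\dots$. Then $$\phi_\pi(X_1,\dots,X_n)=\phi_{\pi'}(X_1,\dots,X_n)\,\phi_{\pi''}(X_1,\dots,X_n)\cdots$$ and $$K_\pi(X_1,\dots,X_n)=K_{\pi'}(X_1,\dots,X_n)\,K_{\pi''}(X_1,\dots,X_n)\cdots.$$
   Context: A noncommutative probability space is a pair $(\mathcal A,\phi)$ of a complex unital algebra $\mathcal A$ and a unital linear functional $\phi$. An exchangeability system $\mathcal E$ for $(\mathcal A,\phi)$ consists of a noncommutative probability space $(\mathcal U,\tilde\phi)$ and a family $(\iota_k)_{k\in\mathbb N}$ of embeddings (injective unital algebra homomorphisms) $\iota_k:\mathcal A\to\mathcal A_k\subseteq\mathcal U$ with $\tilde\phi\circ\iota_k=\phi$; write $X^{(k)}=\iota_k(X)$. It is required that for all $X_1,\dots,X_n\in\mathcal A$, indices $i_1,\dots,i_n\in\mathbb N$ and bijections $\sigma$ of $\mathbb N$, $\tilde\phi(X_1^{(i_1)}\cdots X_n^{(i_n)})=\tilde\phi(X_1^{(\sigma(i_1))}\cdots X_n^{(\sigma(i_n))})$; this value depends only on the kernel of $j\mapsto i_j$ and for a partition $\sigma$ of $[n]$ is denoted $\phi_\sigma(X_1,\dots,X_n)$. If $\sigma$ is a partition of a subset $S\subseteq[n]$,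 $\phi_\sigma(X_1,\dots,X_n)$ means $\phi_\sigma(X_j:j\in S)$ with the $X_j$ in increasing order of $j$ (and $\sigma$ transported to a partition of $[|S|]$); similarly for $K_\sigma$. $\Pi_n$ is the set-partition lattice of $[n]$ under refinement with Möbius function $\mu$; $K_\pi=\sum_{\sigma\le\pi}\phi_\sigma\mu(\sigma,\pi)$. Two distinct blocks $B,B'$ of $\pi$ cross if there are $a<b<c<d$ with $a,c$ in one of them and $b,d$ in the other; the connected components of $\pi$ are the subpartitions formed by the equivalence classes of blocks under the equivalence relation generated by crossing. The family $(\mathcal A_k)$ satisfies pyramidal independence if for all disjoint $I,J\subseteq\mathbb N$, with $\mathcal A_I,\mathcal A_J$ the subalgebras generated by $(\mathcal A_k)_{k\in I}$, $(\mathcal A_k)_{k\in J}$, one has $\tilde\phi(XYX')=\tilde\phi(XX')\tilde\phi(Y)$ whenever $X,X'\in\mathcal A_I$, $Y\in\mathcal A_J$, and also with the roles of $I$ and $J$ exchanged. *)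

theory Defs
  imports Complex_Main "HOL-Library.Disjoint_Sets"
begin

definition complex_algebra :: "(complex \<Rightarrow> 'a::ring_1 \<Rightarrow> 'a) \<Rightarrow> bool" where
  "complex_algebra sc \<longleftrightarrow> module sc \<and>
     (\<forall>c x y. sc c (x * y) = sc c x * y \<and> sc c (x * y) = x * sc c y)"

definition nc_prob_space :: "(complex \<Rightarrow> 'a::ring_1 \<Rightarrow> 'a) \<Rightarrow> ('a \<Rightarrow> complex) \<Rightarrow> bool" where
  "nc_prob_space sc phi \<longleftrightarrow> complex_algebra sc \<and> phi 1 = 1 \<and>
     (\<forall>x y. phi (x + y) = phi x + phi y) \<and> (\<forall>c x. phi (sc c x) = c * phi x)"

definition unital_alg_embedding ::
  "(complex \<Rightarrow> 'a::ring_1 \<Rightarrow> 'a) \<Rightarrow> (complex \<Rightarrow> 'u::ring_1 \<Rightarrow> 'u) \<Rightarrow> ('a \<Rightarrow> 'u) \<Rightarrow> bool" where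
  "unital_alg_embedding scA scU f \<longleftrightarrow> inj f \<and> f 1 = 1 \<and>
     (\<forall>x y. f (x + y) = f x + f y) \<and> (\<forall>x y. f (x * y) = f x * f y) \<and>
     (\<forall>c x. f (scA c x) = scU c (f x))"

definition mixed_word :: "(nat \<Rightarrow> 'a \<Rightarrow> 'u::ring_1) \<Rightarrow> nat list \<Rightarrow> 'a list \<Rightarrow> 'u" where
  "mixed_word iota idx Xs = prod_list (map2 (\<lambda>i x. iota i x) idx Xs)"

definition exchangeability_system ::
  "(complex \<Rightarrow> 'a::ring_1 \<Rightarrow> 'a) \<Rightarrow> ('a \<Rightarrow> complex) \<Rightarrow>
   (complex \<Rightarrow> 'u::ring_1 \<Rightarrow> 'u) \<Rightarrow> ('u \<Rightarrow> complex) \<Rightarrow> (nat \<Rightarrow> 'a \<Rightarrow> 'u) \<Rightarrow> bool" where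
  "exchangeability_system scA phi scU phiU iota \<longleftrightarrow>
     nc_prob_space scA phi \<and> nc_prob_space scU phiU \<and>
     (\<forall>k. unital_alg_embedding scA scU (iota k) \<and> (\<forall>x. phiU (iota k x) = phi x)) \<and>
     (\<forall>Xs idx (\<sigma>::nat \<Rightarrow> nat). length idx = length Xs \<longrightarrow> bij \<sigma> \<longrightarrow>
        phiU (mixed_word iota idx Xs) = phiU (mixed_word iota (map \<sigma> idx) Xs))"

inductive_set gen_subalg :: "(complex \<Rightarrow> 'u::ring_1 \<Rightarrow> 'u) \<Rightarrow> 'u set \<Rightarrow> 'u set"
  for sc :: "complex \<Rightarrow> 'u \<Rightarrow> 'u" and G :: "'u set" where
  one: "1 \<in> gen_subalg sc G"
| gen: "x \<in> G \<Longrightarrow> x \<in> gen_subalg sc G"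
| add: "x \<in> gen_subalg sc G \<Longrightarrow> y \<in> gen_subalg sc G \<Longrightarrow> x + y \<in> gen_subalg sc G"
| mult: "x \<in> gen_subalg sc G \<Longrightarrow> y \<in> gen_subalg sc G \<Longrightarrow> x * y \<in> gen_subalg sc G"
| scale: "x \<in> gen_subalg sc G \<Longrightarrow> sc c x \<in> gen_subalg sc G"

definition alg_I :: "(complex \<Rightarrow> 'u::ring_1 \<Rightarrow> 'u) \<Rightarrow> (nat \<Rightarrow> 'a \<Rightarrow> 'u) \<Rightarrow> nat set \<Rightarrow> 'u set" where
  "alg_I scU iota I = gen_subalg scU (\<Union>k\<in>I. range (iota k))"

definition pyramidal_independence ::
  "(complex \<Rightarrow> 'u::ring_1 \<Rightarrow> 'u) \<Rightarrow> ('u \<Rightarrow> complex) \<Rightarrow> (nat \<Rightarrow> 'a \<Rightarrow> 'u) \<Rightarrow> bool" where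
  "pyramidal_independence scU phiU iota \<longleftrightarrow>
     (\<forall>I J. I \<inter> J = {} \<longrightarrow>
        (\<forall>X\<in>alg_I scU iota I. \<forall>X'\<in>alg_I scU iota I. \<forall>Y\<in>alg_I scU iota J.
           phiU (X * Y * X') = phiU (X * X') * phiU Y) \<and>
        (\<forall>X\<in>alg_I scU iota J. \<forall>X'\<in>alg_I scU iota J. \<forall>Y\<in>alg_I scU iota I.
           phiU (X * Y * X') = phiU (X * X') * phiU Y))"

text \<open>Partitions of [n], realised on the index set {0..<n}.\<close>
definition set_partitions :: "nat \<Rightarrow> nat set set set" where
  "set_partitions n = {P. partition_on {0..<n} P}"

definition refines :: "'b set set \<Rightarrow> 'b set set \<Rightarrow> bool" where
  "refines \<sigma> \<pi> \<longleftrightarrow> (\<forall>B\<in>\<sigma>. \<exists>C\<in>\<pi>. B \<subseteq> C)"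

text \<open>The fuel k bounds the recursion depth; card P suffices.\<close>
fun mobius_fuel :: "nat \<Rightarrow> 'c set \<Rightarrow> ('c \<Rightarrow> 'c \<Rightarrow> bool) \<Rightarrow> 'c \<Rightarrow> 'c \<Rightarrow> int" where
  "mobius_fuel 0 P le x y = (if x = y then 1 else 0)"
| "mobius_fuel (Suc k) P le x y =
     (if x = y then 1
      else if le x y then - (\<Sum>z\<in>{z\<in>P. le x z \<and> le z y \<and> z \<noteq> y}. mobius_fuel k P le x z)
      else 0)"

definition mobius :: "'c set \<Rightarrow> ('c \<Rightarrow> 'c \<Rightarrow> bool) \<Rightarrow> 'c \<Rightarrow> 'c \<Rightarrow> int" where
  "mobius P le x y = mobius_fuel (card P) P le x y"

definition mu_Pi :: "nat \<Rightarrow> nat set set \<Rightarrow> nat set set \<Rightarrow> int" where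
  "mu_Pi n = mobius (set_partitions n) refines"

text \<open>The block of a partition containing j, and a labelling of positions whose kernel is sigma
  (each position is labelled by the least element of its block).\<close>
definition block_of :: "nat set set \<Rightarrow> nat \<Rightarrow> nat set" where
  "block_of \<sigma> j = (THE B. B \<in> \<sigma> \<and> j \<in> B)"

definition phi_part :: "('u::ring_1 \<Rightarrow> complex) \<Rightarrow> (nat \<Rightarrow> 'a \<Rightarrow> 'u) \<Rightarrow> nat set set \<Rightarrow> 'a list \<Rightarrow> complex" where
  "phi_part phiU iota \<sigma> Xs =
     phiU (mixed_word iota (map (\<lambda>j. Min (block_of \<sigma> j)) [0..<length Xs]) Xs)"

definition K_part :: "('u::ring_1 \<Rightarrow> complex) \<Rightarrow> (nat \<Rightarrow> 'a \<Rightarrow> 'u) \<Rightarrow> nat set set \<Rightarrow> 'a list \<Rightarrow> complex" where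
  "K_part phiU iota \<pi> Xs =
     (\<Sum>\<sigma>\<in>{\<sigma>\<in>set_partitions (length Xs). refines \<sigma> \<pi>}.
        phi_part phiU iota \<sigma> Xs * of_int (mu_Pi (length Xs) \<sigma> \<pi>))"

text \<open>For a partition c of a subset S of the positions, restrict the list to the positions in S
  (in increasing order) and transport c to a partition of {0..<card S}.\<close>
definition sub_list :: "nat set set \<Rightarrow> 'a list \<Rightarrow> 'a list" where
  "sub_list c Xs = map (nth Xs) (sorted_list_of_set (\<Union>c))"

definition transport_part :: "nat set set \<Rightarrow> nat set set" where
  "transport_part c = (let s = sorted_list_of_set (\<Union>c) in
     (\<lambda>B. {i. i < length s \<and> s ! i \<in> B}) ` c)"

definition phi_sub :: "('u::ring_1 \<Rightarrow> complex) \<Rightarrow> (nat \<Rightarrow> 'a \<Rightarrow> 'u) \<Rightarrow> nat set set \<Rightarrow> 'a list \<Rightarrow> complex" where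
  "phi_sub phiU iota c Xs = phi_part phiU iota (transport_part c) (sub_list c Xs)"

definition K_sub :: "('u::ring_1 \<Rightarrow> complex) \<Rightarrow> (nat \<Rightarrow> 'a \<Rightarrow> 'u) \<Rightarrow> nat set set \<Rightarrow> 'a list \<Rightarrow> complex" where
  "K_sub phiU iota c Xs = K_part phiU iota (transport_part c) (sub_list c Xs)"

definition crosses :: "nat set \<Rightarrow> nat set \<Rightarrow> bool" where
  "crosses B B' \<longleftrightarrow> B \<noteq> B' \<and>
     (\<exists>a b c d. a < b \<and> b < c \<and> c < d \<and>
        ((a \<in> B \<and> c \<in> B \<and> b \<in> B' \<and> d \<in> B') \<or> (a \<in> B' \<and> c \<in> B' \<and> b \<in> B \<and> d \<in> B)))"

definition cross_rel :: "nat set set \<Rightarrow> (nat set \<times> nat set) set" where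
  "cross_rel \<pi> = {(B, B'). B \<in> \<pi> \<and> B' \<in> \<pi> \<and> crosses B B'}"

definition components :: "nat set set \<Rightarrow> nat set set set" where
  "components \<pi> = (\<lambda>B. {B'\<in>\<pi>. (B, B') \<in> (cross_rel \<pi> \<union> (cross_rel \<pi>)\<inverse>)\<^sup>*}) ` \<pi>"

end

theory Submission
  imports Defs "HOL-Library.Infinite_Set"
begin

text \<open>Write \<phi>_\<sigma> as \<phi>_U of a word whose letter at position j is the copy of X_j labelled by
  the least element of the block of j. If the positions covered by a set T of blocks form an
  interval within those covered by \<sigma>, the letters of T form a middle factor of the word whose
  labels differ from all others, and pyramidal independence gives \<phi>_\<sigma> = \<phi>_T \<phi>_(\<sigma> - T).
  A connected component of minimal spread (largest minus least position it covers) has this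
  property, so induction on the number of blocks
  factorises \<phi>_\<sigma> over every grouping of the blocks that no crossing connects, in particular over
  the components. Exchangeability makes the labels, and hence the transport of a component to an
  initial segment, irrelevant.

  The refinements of \<pi> are the products of refinements of its components, and the Moebius
  function of the partition lattice is multiplicative along this decomposition; with the
  factorisation of every \<phi>_\<sigma>, \<sigma> \<le> \<pi>, this gives K_\<pi> = \<Prod> K_\<pi>'.\<close>

section \<open>Crossing components of a partition\<close>

definition finite_partition :: "'a set set \<Rightarrow> bool" where
  "finite_partition \<sigma> \<longleftrightarrow> finite \<sigma> \<and> (\<forall>B\<in>\<sigma>. finite B \<and> B \<noteq> {}) \<and> disjoint \<sigma>"

lemma finite_partition_iff_partition_on:
  "finite_partition \<sigma> \<longleftrightarrow> finite (\<Union>\<sigma>) \<and> partition_on (\<Union>\<sigma>) \<sigma>"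
proof
  assume "finite_partition \<sigma>"
  then show "finite (\<Union>\<sigma>) \<and> partition_on (\<Union>\<sigma>) \<sigma>"
    unfolding finite_partition_def partition_on_def by auto
next
  assume "finite (\<Union>\<sigma>) \<and> partition_on (\<Union>\<sigma>) \<sigma>"
  then show "finite_partition \<sigma>"
    unfolding finite_partition_def partition_on_def
    by (metis Union_upper finite_UnionD rev_finite_subset)
qed

lemma finite_partition_subset: "finite_partition \<sigma> \<Longrightarrow> \<tau> \<subseteq> \<sigma> \<Longrightarrow> finite_partition \<tau>"
  unfolding finite_partition_def by (meson finite_subset pairwise_subset subset_iff)

lemma finite_partition_disjointD:
  "finite_partition \<sigma> \<Longrightarrow> B \<in> \<sigma> \<Longrightarrow> B' \<in> \<sigma> \<Longrightarrow> B \<noteq> B' \<Longrightarrow> B \<inter> B' = {}"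
  unfolding finite_partition_def by (auto dest: disjointD)

lemma block_of_eq: "disjoint \<sigma> \<Longrightarrow> B \<in> \<sigma> \<Longrightarrow> j \<in> B \<Longrightarrow> block_of \<sigma> j = B"
  unfolding block_of_def by (rule the_equality) (auto dest: disjointD)

lemma block_of_in:
  assumes "disjoint \<sigma>" "j \<in> \<Union>\<sigma>"
  shows "block_of \<sigma> j \<in> \<sigma>" and "j \<in> block_of \<sigma> j"
  using assms block_of_eq[OF assms(1)] by auto

lemma block_of_subset:
  assumes "disjoint \<sigma>" "\<tau> \<subseteq> \<sigma>" "j \<in> \<Union>\<tau>"
  shows "block_of \<sigma> j = block_of \<tau> j"
  using assms block_of_eq[OF assms(1)] block_of_eq[OF pairwise_subset[OF assms(1,2)]] by blast

lemma inj_on_Min_blocks: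
  fixes \<sigma> :: "'a::linorder set set"
  assumes "finite_partition \<sigma>"
  shows "inj_on Min \<sigma>"
proof (rule inj_onI)
  fix B B' assume B: "B \<in> \<sigma>" "B' \<in> \<sigma>" "Min B = Min B'"
  have "Min B \<in> B" "Min B' \<in> B'"
    using B(1,2) assms unfolding finite_partition_def by auto
  with B have "B \<inter> B' \<noteq> {}" by auto
  with B show "B = B'" using finite_partition_disjointD[OF assms] by metis
qed

lemma crosses_sym: "crosses B B' \<longleftrightarrow> crosses B' B"
  unfolding crosses_def by blast

lemma crosses_mono: "crosses B B' \<Longrightarrow> B \<subseteq> C \<Longrightarrow> B' \<subseteq> C' \<Longrightarrow> C \<noteq> C' \<Longrightarrow> crosses C C'"
  unfolding crosses_def by blast

lemma crosses_interleaved: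
  assumes "crosses D D'"
  shows "\<exists>x\<in>D. \<exists>y\<in>D'. x < y" and "\<exists>x\<in>D. \<exists>y\<in>D'. y < x"
    and "\<exists>x\<in>D. \<exists>y\<in>D. \<exists>z\<in>D'. x < z \<and> z < y"
  using assms unfolding crosses_def by (elim conjE exE disjE; blast)+

lemma crosses_if_straddles:
  assumes "finite B" "B \<noteq> {}" "B \<inter> D = {}"
    and "d \<in> D" "Min B < d" "d < Max B" and "e \<in> D" "e < Min B \<or> Max B < e"
  shows "crosses B D"
proof -
  have "Min B \<in> B" "Max B \<in> B" using assms(1,2) by auto
  then show ?thesis using assms unfolding crosses_def by blast
qed

definition component_of :: "nat set set \<Rightarrow> nat set \<Rightarrow> nat set set" where
  "component_of \<sigma> B0 = {B\<in>\<sigma>. (B0, B) \<in> (cross_rel \<sigma>)\<^sup>*}"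

lemma components_eq: "components \<sigma> = component_of \<sigma> ` \<sigma>"
proof -
  have "cross_rel \<sigma> \<union> (cross_rel \<sigma>)\<inverse> = cross_rel \<sigma>"
    unfolding cross_rel_def using crosses_sym by auto
  then show ?thesis unfolding components_def component_of_def by simp
qed

lemma component_of_self: "B \<in> \<sigma> \<Longrightarrow> B \<in> component_of \<sigma> B"
  unfolding component_of_def by auto

lemma component_of_subset: "component_of \<sigma> B0 \<subseteq> \<sigma>"
  unfolding component_of_def by auto

lemma component_of_closed:
  "B \<in> component_of \<sigma> B0 \<Longrightarrow> B' \<in> \<sigma> \<Longrightarrow> crosses B B' \<Longrightarrow> B' \<in> component_of \<sigma> B0"
  unfolding component_of_def cross_rel_def by (auto intro: rtrancl_into_rtrancl)

lemma component_of_least: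
  assumes "B0 \<in> Q" and closed: "\<And>D D'. D \<in> Q \<Longrightarrow> D' \<in> \<sigma> \<Longrightarrow> crosses D D' \<Longrightarrow> D' \<in> Q"
  shows "component_of \<sigma> B0 \<subseteq> Q"
proof
  fix B assume "B \<in> component_of \<sigma> B0"
  then have "(B0, B) \<in> (cross_rel \<sigma>)\<^sup>*" unfolding component_of_def by simp
  then show "B \<in> Q"
    by (induction rule: rtrancl_induct) (use assms in \<open>auto simp: cross_rel_def\<close>)
qed

lemma component_of_eq: "B \<in> component_of \<sigma> B0 \<Longrightarrow> component_of \<sigma> B = component_of \<sigma> B0"
proof -
  assume B: "B \<in> component_of \<sigma> B0"
  have sym: "sym (cross_rel \<sigma>)"
    unfolding sym_def cross_rel_def using crosses_sym by auto
  from B have "(B0, B) \<in> (cross_rel \<sigma>)\<^sup>*" "(B, B0) \<in> (cross_rel \<sigma>)\<^sup>*"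
    unfolding component_of_def using sym sym_rtrancl by (auto dest: symD)
  then show ?thesis unfolding component_of_def by (auto intro: rtrancl_trans)
qed

lemma components_unique: "c \<in> components \<sigma> \<Longrightarrow> c' \<in> components \<sigma> \<Longrightarrow> B \<in> c \<Longrightarrow> B \<in> c' \<Longrightarrow> c = c'"
  unfolding components_eq by (metis component_of_eq imageE)

lemma partition_on_components: "partition_on \<sigma> (components \<sigma>)"
proof (rule partition_onI)
  show "\<Union>(components \<sigma>) = \<sigma>"
    unfolding components_eq using component_of_self component_of_subset by blast
  show "disjnt c c'" if "c \<in> components \<sigma>" "c' \<in> components \<sigma>" "c \<noteq> c'" for c c'
    using that components_unique unfolding disjnt_def by blast
  show "{} \<notin> components \<sigma>"
    unfolding components_eq using component_of_self by blast
qed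

lemma finite_components: "finite \<sigma> \<Longrightarrow> finite (components \<sigma>)"
  unfolding components_eq by simp

lemma components_subset: "c \<in> components \<sigma> \<Longrightarrow> c \<subseteq> \<sigma>"
  unfolding components_eq using component_of_subset by blast

lemma components_closed:
  "c \<in> components \<sigma> \<Longrightarrow> B \<in> c \<Longrightarrow> B' \<in> \<sigma> \<Longrightarrow> crosses B B' \<Longrightarrow> B' \<in> c"
  unfolding components_eq using component_of_closed by blast

lemma components_not_crossing:
  assumes "c \<in> components \<sigma>" "c' \<in> components \<sigma>" "c \<noteq> c'" "B \<in> c" "B' \<in> c'"
  shows "\<not> crosses B B'"
proof
  assume "crosses B B'"
  moreover have "B' \<in> \<sigma>" using assms(2,5) components_subset by blast
  ultimately have "B' \<in> c" using components_closed assms(1,4) by blast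
  then show False using components_unique assms by blast
qed

definition convex_in :: "nat set \<Rightarrow> nat set \<Rightarrow> bool" where
  "convex_in S M \<longleftrightarrow> (\<forall>a\<in>M. \<forall>b\<in>M. \<forall>j\<in>S. a < j \<longrightarrow> j < b \<longrightarrow> j \<in> M)"

definition spread :: "nat set set \<Rightarrow> nat" where
  "spread c = Max (\<Union>c) - Min (\<Union>c)"

lemma component_straddles_gap:
  assumes \<sigma>: "finite_partition \<sigma>" and c: "c \<in> components \<sigma>"
    and "a \<in> \<Union>c" "b \<in> \<Union>c" "a < j" "j < b" "j \<notin> \<Union>c"
  shows "\<exists>B\<in>c. Min B < j \<and> j < Max B"
proof (rule ccontr)
  assume no_straddle: "\<not> ?thesis"
  define left where "left D \<longleftrightarrow> (\<forall>x\<in>D. x < j)" for D :: "nat set"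
  have one_side: "left D \<longleftrightarrow> \<not> (\<forall>x\<in>D. j < x)" if "D \<in> c" for D
  proof -
    have "D \<in> \<sigma>" using that components_subset[OF c] by blast
    then have D: "finite D" "D \<noteq> {}" using \<sigma> unfolding finite_partition_def by auto
    have "Max D \<noteq> j" "Min D \<noteq> j" using Max_in[OF D] Min_in[OF D] \<open>j \<notin> \<Union>c\<close> that by auto
    moreover have "\<not> (Min D < j \<and> j < Max D)" using no_straddle that by blast
    ultimately have "Max D < j \<or> j < Min D" by linarith
    then have "(\<forall>x\<in>D. x < j) \<or> (\<forall>x\<in>D. j < x)" using D by (simp add: Max_less_iff Min_gr_iff)
    moreover have "\<not> ((\<forall>x\<in>D. x < j) \<and> (\<forall>x\<in>D. j < x))" using \<open>D \<noteq> {}\<close> by fastforce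
    ultimately show ?thesis unfolding left_def by blast
  qed
  obtain Da Db where Da: "Da \<in> c" "a \<in> Da" and Db: "Db \<in> c" "b \<in> Db"
    using \<open>a \<in> \<Union>c\<close> \<open>b \<in> \<Union>c\<close> by blast
  have "c = component_of \<sigma> Da"
    using c Da(1) components_eq component_of_eq by auto
  also have "component_of \<sigma> Da \<subseteq> {D \<in> c. left D}"
  proof (rule component_of_least)
    show "Da \<in> {D \<in> c. left D}" using Da one_side \<open>a < j\<close> by fastforce
  next
    fix D D' assume D: "D \<in> {D \<in> c. left D}" and "D' \<in> \<sigma>" "crosses D D'"
    then have "D' \<in> c" using components_closed[OF c] by blast
    moreover have "\<not> (\<forall>x\<in>D'. j < x)"
      using D crosses_interleaved(2)[OF \<open>crosses D D'\<close>] unfolding left_def by fastforce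
    ultimately show "D' \<in> {D \<in> c. left D}" using one_side by blast
  qed
  finally have "left Db" using Db(1) by blast
  then show False using Db(2) \<open>j < b\<close> unfolding left_def by fastforce
qed

lemma block_inside_hull:
  assumes \<sigma>: "finite_partition \<sigma>" and c: "c \<in> components \<sigma>" and B: "B \<in> c"
    and D: "D \<in> \<sigma>" "D \<notin> c" and x: "x \<in> D" "Min B < x" "x < Max B"
  shows "\<forall>y\<in>D. Min B < y \<and> y < Max B"
proof
  fix y assume y: "y \<in> D"
  have "B \<in> \<sigma>" using B components_subset[OF c] by blast
  then have fB: "finite B" "B \<noteq> {}" using \<sigma> unfolding finite_partition_def by auto
  have disj: "B \<inter> D = {}" using finite_partition_disjointD[OF \<sigma> \<open>B \<in> \<sigma>\<close> D(1)] B D(2) by blast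
  then have "y \<noteq> Min B" "y \<noteq> Max B" using Min_in[OF fB] Max_in[OF fB] y by auto
  moreover have "\<not> crosses B D" using components_closed[OF c B D(1)] D(2) by blast
  then have "\<not> (y < Min B \<or> Max B < y)" using crosses_if_straddles[OF fB disj x y] by metis
  ultimately show "Min B < y \<and> y < Max B" by auto
qed

lemma component_inside_hull:
  assumes \<sigma>: "finite_partition \<sigma>" and c: "c \<in> components \<sigma>" and B: "B \<in> c"
    and D0: "D0 \<in> \<sigma>" "D0 \<notin> c" "j \<in> D0" "Min B < j" "j < Max B"
  shows "\<forall>D\<in>component_of \<sigma> D0. \<forall>y\<in>D. Min B < y \<and> y < Max B"
proof -
  let ?Q = "{D \<in> \<sigma>. D \<notin> c \<and> (\<forall>y\<in>D. Min B < y \<and> y < Max B)}"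
  have "component_of \<sigma> D0 \<subseteq> ?Q"
  proof (rule component_of_least)
    show "D0 \<in> ?Q" using block_inside_hull[OF \<sigma> c B D0] D0(1,2) by blast
  next
    fix D D' assume "D \<in> ?Q" and D': "D' \<in> \<sigma>" and cr: "crosses D D'"
    then have D: "D \<in> \<sigma>" "D \<notin> c" "\<forall>y\<in>D. Min B < y \<and> y < Max B" by auto
    have "D' \<notin> c"
    proof
      assume "D' \<in> c"
      then have "D \<in> c" using components_closed[OF c _ D(1)] cr crosses_sym by blast
      then show False using D(2) by blast
    qed
    obtain x y z where xyz: "x \<in> D" "y \<in> D" "z \<in> D'" "x < z" "z < y"
      using crosses_interleaved(3)[OF cr] by blast
    then have "Min B < z" "z < Max B" using D(3) by fastforce+
    then have "\<forall>y\<in>D'. Min B < y \<and> y < Max B"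
      using block_inside_hull[OF \<sigma> c B D' \<open>D' \<notin> c\<close> \<open>z \<in> D'\<close>] by blast
    then show "D' \<in> ?Q" using D' \<open>D' \<notin> c\<close> by blast
  qed
  then show ?thesis by blast
qed

text \<open>A gap of a component c is filled by a component lying strictly inside the hull of one
  block of c, hence of smaller spread.\<close>
lemma min_spread_component_convex:
  assumes \<sigma>: "finite_partition \<sigma>" and c: "c \<in> components \<sigma>"
    and min: "\<forall>c'\<in>components \<sigma>. spread c \<le> spread c'"
  shows "convex_in (\<Union>\<sigma>) (\<Union>c)"
  unfolding convex_in_def
proof (intro ballI impI, rule ccontr)
  fix a b j assume "a \<in> \<Union>c" "b \<in> \<Union>c" "j \<in> \<Union>\<sigma>" "a < j" "j < b" "j \<notin> \<Union>c"
  then obtain B where B: "B \<in> c" "Min B < j" "j < Max B"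
    using component_straddles_gap[OF \<sigma> c] by blast
  obtain D0 where D0: "D0 \<in> \<sigma>" "j \<in> D0" using \<open>j \<in> \<Union>\<sigma>\<close> by blast
  define d where "d = component_of \<sigma> D0"
  have "D0 \<notin> c" using D0(2) \<open>j \<notin> \<Union>c\<close> by blast
  then have inside: "\<forall>y\<in>\<Union>d. Min B < y \<and> y < Max B"
    using component_inside_hull[OF \<sigma> c B(1) D0(1) _ D0(2) B(2,3)] unfolding d_def by blast
  have fin: "finite (\<Union>\<sigma>)" using \<sigma> unfolding finite_partition_def by blast
  have "\<Union>d \<subseteq> \<Union>\<sigma>" using component_of_subset unfolding d_def by blast
  then have fd: "finite (\<Union>d)" "\<Union>d \<noteq> {}"
    using rev_finite_subset[OF fin] D0 component_of_self unfolding d_def by blast+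
  have fc: "finite (\<Union>c)" using components_subset[OF c] rev_finite_subset[OF fin] by blast
  have "B \<in> \<sigma>" using B components_subset[OF c] by blast
  then have fB: "finite B" "B \<noteq> {}" using \<sigma> unfolding finite_partition_def by auto
  have "Min B < Min (\<Union>d)" "Max (\<Union>d) < Max B" "Min (\<Union>d) \<le> Max (\<Union>d)"
    using inside Min_in[OF fd] Max_in[OF fd] Min_le[OF fd(1) Max_in[OF fd]] by auto
  moreover have "Min (\<Union>c) \<le> Min B" "Max B \<le> Max (\<Union>c)"
    using Min_in[OF fB] Max_in[OF fB] B(1) fc by (auto intro: Min_le Max_ge)
  ultimately have "spread d < spread c" unfolding spread_def by linarith
  moreover have "d \<in> components \<sigma>" using D0 components_eq unfolding d_def by blast
  moreover have "spread c \<le> spread d" using min \<open>d \<in> components \<sigma>\<close> by blast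
  ultimately show False by linarith
qed

lemma convex_in_subset: "convex_in S M \<Longrightarrow> S' \<subseteq> S \<Longrightarrow> convex_in S' M"
  unfolding convex_in_def by blast

lemma ex_convex_component:
  assumes "finite_partition \<sigma>" "\<sigma> \<noteq> {}"
  obtains c where "c \<in> components \<sigma>" "convex_in (\<Union>\<sigma>) (\<Union>c)"
proof -
  let ?c = "arg_min_on spread (components \<sigma>)"
  have fin: "finite (components \<sigma>)"
    using assms(1) finite_components unfolding finite_partition_def by blast
  have ne: "components \<sigma> \<noteq> {}" using assms(2) unfolding components_eq by simp
  have "?c \<in> components \<sigma>" by (rule arg_min_if_finite(1)[OF fin ne])
  moreover have "\<forall>c'\<in>components \<sigma>. spread ?c \<le> spread c'" using arg_min_least[OF fin ne] by blast
  ultimately show ?thesis using min_spread_component_convex[OF assms(1)] that by blast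
qed

definition noncrossing_grouping :: "nat set set \<Rightarrow> 'i set \<Rightarrow> ('i \<Rightarrow> nat set set) \<Rightarrow> bool" where
  "noncrossing_grouping \<sigma> A G \<longleftrightarrow> (\<forall>a\<in>A. G a \<subseteq> \<sigma>) \<and> \<sigma> \<subseteq> (\<Union>a\<in>A. G a) \<and> disjoint_family_on G A \<and>
     (\<forall>a\<in>A. \<forall>b\<in>A. a \<noteq> b \<longrightarrow> (\<forall>B\<in>G a. \<forall>B'\<in>G b. \<not> crosses B B'))"

lemma component_of_subset_group:
  assumes G: "noncrossing_grouping \<sigma> A G" and a0: "a0 \<in> A" "B0 \<in> G a0"
  shows "component_of \<sigma> B0 \<subseteq> G a0"
proof (rule component_of_least)
  fix D D' assume "D \<in> G a0" "D' \<in> \<sigma>" "crosses D D'"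
  moreover obtain b where "b \<in> A" "D' \<in> G b" using \<open>D' \<in> \<sigma>\<close> G unfolding noncrossing_grouping_def
    by blast
  ultimately have "b = a0" using G a0(1) unfolding noncrossing_grouping_def by metis
  with \<open>D' \<in> G b\<close> show "D' \<in> G a0" by simp
qed (fact a0(2))

lemma noncrossing_grouping_remove:
  assumes G: "noncrossing_grouping \<sigma> A G" and a0: "a0 \<in> A" and c: "c \<subseteq> G a0"
  shows "noncrossing_grouping (\<sigma> - c) A (G(a0 := G a0 - c))"
proof -
  let ?G = "G(a0 := G a0 - c)"
  have smaller: "?G a \<subseteq> G a" for a by simp
  have "G a \<inter> c = {}" if "a \<in> A" "a \<noteq> a0" for a
    using G a0 c that unfolding noncrossing_grouping_def disjoint_family_on_def by blast
  then have "\<forall>a\<in>A. ?G a \<subseteq> \<sigma> - c" "\<sigma> - c \<subseteq> (\<Union>a\<in>A. ?G a)"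
    using G a0 unfolding noncrossing_grouping_def by auto
  moreover have "disjoint_family_on ?G A"
    using G smaller unfolding noncrossing_grouping_def disjoint_family_on_def by blast
  moreover have "\<forall>a\<in>A. \<forall>b\<in>A. a \<noteq> b \<longrightarrow> (\<forall>B\<in>?G a. \<forall>B'\<in>?G b. \<not> crosses B B')"
    using G smaller unfolding noncrossing_grouping_def by blast
  ultimately show ?thesis unfolding noncrossing_grouping_def by blast
qed

lemma noncrossing_grouping_components: "noncrossing_grouping \<sigma> (components \<sigma>) (\<lambda>c. c)"
proof -
  have "\<sigma> \<subseteq> \<Union>(components \<sigma>)"
    using partition_onD1[OF partition_on_components[of \<sigma>]] by blast
  moreover have "disjoint_family_on (\<lambda>c. c) (components \<sigma>)"
    unfolding disjoint_family_on_def using components_unique by blast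
  ultimately show ?thesis
    unfolding noncrossing_grouping_def using components_subset components_not_crossing by auto
qed

section \<open>Enumerating a finite set of positions\<close>

lemma sorted_list_of_set_append:
  fixes A B :: "'a::linorder set"
  assumes "finite A" "finite B" "\<forall>a\<in>A. \<forall>b\<in>B. a < b"
  shows "sorted_list_of_set (A \<union> B) = sorted_list_of_set A @ sorted_list_of_set B"
proof (rule sorted_distinct_set_unique)
  show "sorted (sorted_list_of_set A @ sorted_list_of_set B)"
    "distinct (sorted_list_of_set A @ sorted_list_of_set B)"
    using assms by (auto simp: sorted_append intro: less_imp_le)
qed (use assms in auto)

lemma sorted_list_of_set_convex_split:
  fixes S M :: "nat set"
  assumes S: "finite S" and M: "M \<subseteq> S" "M \<noteq> {}" and convex: "convex_in S M"
  obtains L R where "sorted_list_of_set S = L @ sorted_list_of_set M @ R"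
    and "sorted_list_of_set (S - M) = L @ R"
proof -
  define Left where "Left = {j\<in>S. j < Min M}"
  define Right where "Right = {j\<in>S. Max M < j}"
  have fin: "finite M" "finite Left" "finite Right"
    using S M rev_finite_subset unfolding Left_def Right_def by auto
  have bounds: "Min M \<le> x \<and> x \<le> Max M" if "x \<in> M" for x using fin(1) that by auto
  have minmax: "Min M \<le> Max M" using bounds Min_in[OF fin(1) M(2)] by blast
  have "S - M = Left \<union> Right"
  proof
    show "S - M \<subseteq> Left \<union> Right"
    proof
      fix j assume j: "j \<in> S - M"
      then have "\<not> (Min M < j \<and> j < Max M)"
        using convex Min_in[OF fin(1) M(2)] Max_in[OF fin(1) M(2)] unfolding convex_in_def by blast
      moreover have "j \<noteq> Min M" "j \<noteq> Max M" using j Min_in[OF fin(1) M(2)] Max_in[OF fin(1) M(2)]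
        by auto
      ultimately show "j \<in> Left \<union> Right" using j unfolding Left_def Right_def by auto
    qed
    show "Left \<union> Right \<subseteq> S - M" by (auto simp: Left_def Right_def dest: bounds)
  qed
  moreover have "S = Left \<union> (M \<union> Right)" using M(1) \<open>S - M = Left \<union> Right\<close> by blast
  moreover have "\<forall>a\<in>Left. \<forall>b\<in>M \<union> Right. a < b" "\<forall>a\<in>M. \<forall>b\<in>Right. a < b"
    "\<forall>a\<in>Left. \<forall>b\<in>Right. a < b"
    using minmax by (auto simp: Left_def Right_def dest!: bounds)
  ultimately show ?thesis using that fin by (simp add: sorted_list_of_set_append)
qed

definition rank_in :: "nat set \<Rightarrow> nat \<Rightarrow> nat" where
  "rank_in S = inv_into {..<card S} ((!) (sorted_list_of_set S))"

lemma bij_betw_nth_sorted_list_of_set: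
  "finite S \<Longrightarrow> bij_betw ((!) (sorted_list_of_set S)) {..<card S} S"
  by (rule bij_betw_nth) auto

lemma bij_betw_rank_in: "finite S \<Longrightarrow> bij_betw (rank_in S) S {..<card S}"
  unfolding rank_in_def by (rule bij_betw_inv_into[OF bij_betw_nth_sorted_list_of_set])

lemma nth_rank_in: "finite S \<Longrightarrow> x \<in> S \<Longrightarrow> sorted_list_of_set S ! rank_in S x = x"
  unfolding rank_in_def by (rule bij_betw_inv_into_right[OF bij_betw_nth_sorted_list_of_set])

lemma rank_in_nth: "finite S \<Longrightarrow> i < card S \<Longrightarrow> rank_in S (sorted_list_of_set S ! i) = i"
  unfolding rank_in_def by (rule bij_betw_inv_into_left[OF bij_betw_nth_sorted_list_of_set]) auto

lemma map_rank_in: "finite S \<Longrightarrow> map (rank_in S) (sorted_list_of_set S) = [0..<card S]"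
  by (rule nth_equalityI) (auto simp: rank_in_nth)

lemma transport_part_eq_image:
  assumes fin: "finite (\<Union>\<rho>)"
  shows "transport_part \<rho> = (`) (rank_in (\<Union>\<rho>)) ` \<rho>"
proof -
  let ?s = "sorted_list_of_set (\<Union>\<rho>)" and ?r = "rank_in (\<Union>\<rho>)"
  have "{i. i < length ?s \<and> ?s ! i \<in> B} = ?r ` B" if "B \<in> \<rho>" for B
  proof
    show "{i. i < length ?s \<and> ?s ! i \<in> B} \<subseteq> ?r ` B"
      using rank_in_nth[OF fin] by (auto intro!: image_eqI)
    show "?r ` B \<subseteq> {i. i < length ?s \<and> ?s ! i \<in> B}"
    proof
      fix i assume "i \<in> ?r ` B"
      then obtain x where x: "x \<in> B" "i = ?r x" by blast
      then have "x \<in> \<Union>\<rho>" using that by blast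
      then show "i \<in> {i. i < length ?s \<and> ?s ! i \<in> B}"
        using x bij_betwE[OF bij_betw_rank_in[OF fin]] nth_rank_in[OF fin \<open>x \<in> \<Union>\<rho>\<close>] by auto
    qed
  qed
  then show ?thesis unfolding transport_part_def Let_def by (auto intro!: image_cong)
qed

lemma transport_part_id:
  assumes "\<Union>\<sigma> = {0..<n}"
  shows "transport_part \<sigma> = \<sigma>"
proof -
  have "{i. i < n \<and> [0..<n] ! i \<in> B} = B" if "B \<in> \<sigma>" for B
  proof -
    have "B \<subseteq> {0..<n}" using assms that by blast
    then show ?thesis by auto
  qed
  then show ?thesis unfolding transport_part_def Let_def assms by simp
qed

lemma sub_list_id: "\<Union>\<sigma> = {0..<length Xs} \<Longrightarrow> sub_list \<sigma> Xs = Xs"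
  unfolding sub_list_def by (simp add: map_nth)

lemma phi_sub_eq_phi_part:
  "\<Union>\<pi> = {0..<length Xs} \<Longrightarrow> phi_sub phiU iota \<pi> Xs = phi_part phiU iota \<pi> Xs"
  unfolding phi_sub_def by (simp add: transport_part_id sub_list_id)

lemma K_sub_eq_K_part:
  "\<Union>\<pi> = {0..<length Xs} \<Longrightarrow> K_sub phiU iota \<pi> Xs = K_part phiU iota \<pi> Xs"
  unfolding K_sub_def by (simp add: transport_part_id sub_list_id)

lemma block_of_image:
  assumes "inj_on g (\<Union>\<sigma>)" "disjoint \<sigma>" "j \<in> \<Union>\<sigma>"
  shows "block_of ((`) g ` \<sigma>) (g j) = g ` block_of \<sigma> j"
  using block_of_eq[OF disjoint_image[OF assms(1,2)]] block_of_in[OF assms(2,3)] by blast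

lemma finite_partition_image:
  "finite_partition \<sigma> \<Longrightarrow> inj_on g (\<Union>\<sigma>) \<Longrightarrow> finite_partition ((`) g ` \<sigma>)"
  unfolding finite_partition_def using disjoint_image by auto

lemma ex_bij_extends_relabelling:
  fixes l l' :: "'b \<Rightarrow> nat"
  assumes "finite A" "inj_on l A" "inj_on l' A"
  obtains \<tau> where "bij \<tau>" "\<forall>B\<in>A. \<tau> (l B) = l' B"
proof -
  define h where "h = l' \<circ> the_inv_into A l"
  have h: "bij_betw h (l ` A) (l' ` A)"
    unfolding h_def using assms(2,3)
    by (meson bij_betw_the_inv_into bij_betw_trans inj_on_imp_bij_betw)
  have "infinite (- (l ` A))" "infinite (- (l' ` A))"
    using assms(1) by (simp_all add: Compl_eq_Diff_UNIV Diff_infinite_finite)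
  then obtain g where g: "bij_betw g (- (l ` A)) (- (l' ` A))"
    using bij_betw_inv_into bij_betw_trans bij_enumerate by metis
  have "bij_betw (\<lambda>x. if x \<in> l ` A then h x else g x) (l ` A \<union> - (l ` A)) (l' ` A \<union> - (l' ` A))"
    by (rule bij_betw_disjoint_Un[OF h g]) auto
  moreover have "\<forall>B\<in>A. h (l B) = l' B"
    using assms(2) unfolding h_def by (auto simp: the_inv_into_f_f)
  ultimately show ?thesis using that[of "\<lambda>x. if x \<in> l ` A then h x else g x"] by auto
qed

section \<open>Moebius functions of finite posets\<close>

definition order_interval :: "'c set \<Rightarrow> ('c \<Rightarrow> 'c \<Rightarrow> bool) \<Rightarrow> 'c \<Rightarrow> 'c \<Rightarrow> 'c set" where
  "order_interval P le x y = {z\<in>P. le x z \<and> le z y}"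

lemma mobius_fuel_refl: "mobius_fuel k P le x x = 1"
  by (cases k) auto

lemma mobius_fuel_not_le: "x \<noteq> y \<Longrightarrow> \<not> le x y \<Longrightarrow> mobius_fuel k P le x y = 0"
  by (cases k) auto

locale finite_poset =
  fixes P :: "'c set" and le :: "'c \<Rightarrow> 'c \<Rightarrow> bool"
  assumes finite: "finite P" and refl: "reflp_on P le" and trans: "transp_on P le"
    and antisym: "antisymp_on P le"
begin

lemma finite_order_interval: "finite (order_interval P le x y)"
  unfolding order_interval_def using finite by simp

lemma card_order_interval_le: "card (order_interval P le x y) \<le> card P"
  unfolding order_interval_def using finite by (intro card_mono) auto

lemma card_order_interval_less:
  assumes "x \<in> P" "y \<in> P" "z \<in> P" "le x y" "le z y" "z \<noteq> y"
  shows "card (order_interval P le x z) < card (order_interval P le x y)"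
proof (rule psubset_card_mono[OF finite_order_interval])
  have "order_interval P le x z \<subseteq> order_interval P le x y"
    using assms transp_onD[OF trans] unfolding order_interval_def by blast
  moreover have "y \<in> order_interval P le x y - order_interval P le x z"
    using assms reflp_onD[OF refl] antisymp_onD[OF antisym] unfolding order_interval_def by blast
  ultimately show "order_interval P le x z \<subset> order_interval P le x y" by blast
qed

lemma order_interval_remove_top:
  assumes "x \<in> P" "y \<in> P" "le x y"
  shows "order_interval P le x y = insert y {z\<in>P. le x z \<and> le z y \<and> z \<noteq> y}"
  using assms reflp_onD[OF refl] unfolding order_interval_def by blast

lemma mobius_fuel_eq:
  assumes x: "x \<in> P"
  shows "y \<in> P \<Longrightarrow> card (order_interval P le x y) \<le> k \<Longrightarrow> card (order_interval P le x y) \<le> k' \<Longrightarrow>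
    mobius_fuel k P le x y = mobius_fuel k' P le x y"
proof (induction "card (order_interval P le x y)" arbitrary: y k k' rule: less_induct)
  case less
  show ?case
  proof (cases "x \<noteq> y \<and> le x y")
    case True
    have "{x, y} \<subseteq> order_interval P le x y"
      using True x less.prems(1) reflp_onD[OF refl] unfolding order_interval_def by blast
    then have "2 \<le> card (order_interval P le x y)"
      using True card_mono[OF finite_order_interval] by (metis card_2_iff)
    then obtain m m' where k: "k = Suc m" "k' = Suc m'"
      using less.prems by (cases k; cases k') auto
    have "mobius_fuel m P le x z = mobius_fuel m' P le x z"
      if "z \<in> P" "le x z" "le z y" "z \<noteq> y" for z
      using less.hyps[OF card_order_interval_less[OF x less.prems(1) that(1) _ that(3,4)]] True
        card_order_interval_less[OF x less.prems(1) that(1) _ that(3,4)] less.prems that k by auto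
    then show ?thesis using True k by (auto intro!: sum.cong)
  qed (metis mobius_fuel_refl mobius_fuel_not_le)
qed

lemma mobius_eq_mobius_fuel:
  "x \<in> P \<Longrightarrow> y \<in> P \<Longrightarrow> card (order_interval P le x y) \<le> k \<Longrightarrow> mobius P le x y = mobius_fuel k P le x y"
  unfolding mobius_def using mobius_fuel_eq card_order_interval_le by blast

lemma mobius_interval_sum:
  assumes x: "x \<in> P" and y: "y \<in> P" and xy: "le x y"
  shows "(\<Sum>z\<in>order_interval P le x y. mobius P le x z) = (if x = y then 1 else 0)"
proof (cases "x = y")
  case True
  then have "order_interval P le x y = {x}"
    using x reflp_onD[OF refl] antisymp_onD[OF antisym] unfolding order_interval_def by blast
  then show ?thesis using True by (simp add: mobius_def mobius_fuel_refl)
next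
  case False
  define W where "W = {z\<in>P. le x z \<and> le z y \<and> z \<noteq> y}"
  have "{x, y} \<subseteq> order_interval P le x y"
    using xy x y reflp_onD[OF refl] unfolding order_interval_def by blast
  then have "2 \<le> card (order_interval P le x y)"
    using False card_mono[OF finite_order_interval] by (metis card_2_iff)
  then obtain k where k: "card P = Suc k" using card_order_interval_le[of x y]
    by (cases "card P") auto
  have "mobius_fuel k P le x z = mobius P le x z" if "z \<in> W" for z
  proof -
    have "card (order_interval P le x z) < card (order_interval P le x y)"
      using card_order_interval_less[OF x y _ xy] that unfolding W_def by blast
    then show ?thesis
      using mobius_eq_mobius_fuel[OF x, of z k] card_order_interval_le[of x y] that k
      unfolding W_def by simp
  qed
  then have "mobius P le x y = - (\<Sum>z\<in>W. mobius P le x z)"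
    unfolding mobius_def k W_def using False xy by simp
  moreover have "y \<notin> W" "finite W" using finite unfolding W_def by auto
  ultimately show ?thesis
    using False order_interval_remove_top[OF x y xy] unfolding W_def by simp
qed

lemma mobius_unique:
  assumes x: "x \<in> P" and y0: "y0 \<in> P"
    and g: "\<And>y. y \<in> P \<Longrightarrow> le x y \<Longrightarrow> le y y0 \<Longrightarrow>
      (\<Sum>z\<in>order_interval P le x y. g z) = (if x = y then 1 else 0)"
  shows "y \<in> P \<Longrightarrow> le x y \<Longrightarrow> le y y0 \<Longrightarrow> g y = mobius P le x y"
proof (induction "card (order_interval P le x y)" arbitrary: y rule: less_induct)
  case less
  define W where "W = {z\<in>P. le x z \<and> le z y \<and> z \<noteq> y}"
  have IV: "order_interval P le x y = insert y W" "y \<notin> W" "finite W"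
    using order_interval_remove_top[OF x less.prems(1,2)] finite unfolding W_def by auto
  have "g z = mobius P le x z" if "z \<in> W" for z
  proof -
    have z: "z \<in> P" "le x z" "le z y" "z \<noteq> y" using that unfolding W_def by auto
    have "le z y0" using transp_onD[OF trans z(1) less.prems(1) y0 z(3) less.prems(3)] .
    then show ?thesis
      using less.hyps[OF card_order_interval_less[OF x less.prems(1) z(1) less.prems(2) z(3,4)]] z
      by blast
  qed
  moreover have "(\<Sum>z\<in>order_interval P le x y. g z) = (\<Sum>z\<in>order_interval P le x y. mobius P le x z)"
    using g[OF less.prems] mobius_interval_sum[OF x less.prems(1,2)] by simp
  ultimately show ?case unfolding IV(1) using IV(2,3) by simp
qed

end

lemma mobius_fuel_iso:
  assumes f: "bij_betw f P Q" and le: "\<And>x y. x \<in> P \<Longrightarrow> y \<in> P \<Longrightarrow> le x y \<longleftrightarrow> le' (f x) (f y)"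
    and x: "x \<in> P"
  shows "y \<in> P \<Longrightarrow> mobius_fuel k P le x y = mobius_fuel k Q le' (f x) (f y)"
proof (induction k arbitrary: y)
  case 0
  then show ?case using f x inj_on_eq_iff[of f P x y] by (simp add: bij_betw_def)
next
  case (Suc k)
  have "{z \<in> Q. le' (f x) z \<and> le' z (f y) \<and> z \<noteq> f y} = f ` {z \<in> P. le x z \<and> le z y \<and> z \<noteq> y}"
    using f le x Suc.prems unfolding bij_betw_def inj_on_def by (auto 4 3)
  moreover have "inj_on f {z \<in> P. le x z \<and> le z y \<and> z \<noteq> y}"
    using f unfolding bij_betw_def by (rule inj_on_subset[OF conjunct1]) blast
  moreover have "f x = f y \<longleftrightarrow> x = y"
    using f x Suc.prems inj_on_eq_iff[of f P x y] by (simp add: bij_betw_def)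
  ultimately show ?case
    using Suc le[OF x Suc.prems] by (simp add: sum.reindex)
qed

lemma mobius_iso:
  assumes "bij_betw f P Q" "\<And>x y. x \<in> P \<Longrightarrow> y \<in> P \<Longrightarrow> le x y \<longleftrightarrow> le' (f x) (f y)"
    and "x \<in> P" "y \<in> P"
  shows "mobius P le x y = mobius Q le' (f x) (f y)"
  using mobius_fuel_iso[of f P Q le le' x y] assms bij_betw_same_card[OF assms(1)]
  by (simp add: mobius_def)

section \<open>Lattices of set partitions\<close>

definition partitions_of :: "'a set \<Rightarrow> 'a set set set" where
  "partitions_of S = {\<sigma>. partition_on S \<sigma>}"

definition refinements :: "'a set \<Rightarrow> 'a set set \<Rightarrow> 'a set set set" where
  "refinements S \<pi> = {\<sigma> \<in> partitions_of S. refines \<sigma> \<pi>}"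

definition cumulant_of :: "('a set set \<Rightarrow> 'b::comm_ring_1) \<Rightarrow> 'a set \<Rightarrow> 'a set set \<Rightarrow> 'b" where
  "cumulant_of F S \<pi> = (\<Sum>\<sigma>\<in>refinements S \<pi>. F \<sigma> * of_int (mobius (partitions_of S) refines \<sigma> \<pi>))"

lemma K_part_eq_cumulant_of:
  "K_part phiU iota \<pi> Xs = cumulant_of (\<lambda>\<sigma>. phi_part phiU iota \<sigma> Xs) {0..<length Xs} \<pi>"
  unfolding K_part_def cumulant_of_def refinements_def partitions_of_def set_partitions_def
    mu_Pi_def ..

lemma cumulant_of_cong:
  "(\<And>\<sigma>. \<sigma> \<in> refinements S \<pi> \<Longrightarrow> F \<sigma> = G \<sigma>) \<Longrightarrow> cumulant_of F S \<pi> = cumulant_of G S \<pi>"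
  unfolding cumulant_of_def by simp

lemma reflp_refines: "reflp refines"
  unfolding refines_def by (rule reflpI) blast

lemma transp_refines: "transp refines"
  unfolding refines_def by (rule transpI) (meson order_trans)

lemma finite_poset_partitions_of: "finite S \<Longrightarrow> finite_poset (partitions_of S) refines"
proof
  show "finite S \<Longrightarrow> finite (partitions_of S)"
    unfolding partitions_of_def by (rule finitely_many_partition_on)
  show "reflp_on (partitions_of S) refines" using reflp_on_subset[OF reflp_refines] by blast
  show "transp_on (partitions_of S) refines" using transp_on_subset[OF transp_refines] by blast
  show "antisymp_on (partitions_of S) refines"
  proof (rule antisymp_onI)
    fix \<sigma> \<tau> assume "\<sigma> \<in> partitions_of S" "\<tau> \<in> partitions_of S" "refines \<sigma> \<tau>" "refines \<tau> \<sigma>"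
    then have "Disjoint_Sets.refines S \<sigma> \<tau>" "Disjoint_Sets.refines S \<tau> \<sigma>"
      unfolding partitions_of_def Disjoint_Sets.refines_def refines_def by auto
    then show "\<sigma> = \<tau>" by (rule Disjoint_Sets.refines_asym)
  qed
qed

lemma finite_partition_if_partitions_of:
  "finite S \<Longrightarrow> \<sigma> \<in> partitions_of S \<Longrightarrow> finite_partition \<sigma>"
  unfolding partitions_of_def finite_partition_iff_partition_on
    by (metis mem_Collect_eq partition_onD1)

lemma partitions_of_Union: "finite_partition \<sigma> \<Longrightarrow> \<sigma> \<in> partitions_of (\<Union>\<sigma>)"
  unfolding partitions_of_def finite_partition_iff_partition_on by blast

lemma image_partitions_of:
  assumes "inj_on g S" "\<sigma> \<in> partitions_of S"
  shows "(`) g ` \<sigma> \<in> partitions_of (g ` S)"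
proof -
  have \<sigma>: "partition_on S \<sigma>" using assms(2) unfolding partitions_of_def by simp
  then have "(`) g ` \<sigma> - {{}} = (`) g ` \<sigma>" unfolding partition_on_def by blast
  with partition_on_inj_image[OF \<sigma> assms(1)] show ?thesis unfolding partitions_of_def by simp
qed

lemma refines_image_iff:
  assumes g: "inj_on g S" and \<sigma>: "\<sigma> \<in> partitions_of S" and \<tau>: "\<tau> \<in> partitions_of S"
  shows "refines ((`) g ` \<sigma>) ((`) g ` \<tau>) \<longleftrightarrow> refines \<sigma> \<tau>"
proof -
  have "g ` B \<subseteq> g ` C \<longleftrightarrow> B \<subseteq> C" if "B \<in> \<sigma>" "C \<in> \<tau>" for B C
  proof
    have "B \<subseteq> S" "C \<subseteq> S" using \<sigma> \<tau> that unfolding partitions_of_def partition_on_def by blast+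
    moreover assume "g ` B \<subseteq> g ` C"
    ultimately show "B \<subseteq> C" using inj_on_image_mem_iff[OF g] by blast
  qed (rule image_mono)
  then have "(\<forall>B\<in>\<sigma>. \<exists>C\<in>\<tau>. g ` B \<subseteq> g ` C) \<longleftrightarrow> refines \<sigma> \<tau>"
    unfolding refines_def by (intro ball_cong bex_cong refl)
  moreover have "refines ((`) g ` \<sigma>) ((`) g ` \<tau>) \<longleftrightarrow> (\<forall>B\<in>\<sigma>. \<exists>C\<in>\<tau>. g ` B \<subseteq> g ` C)"
    unfolding refines_def by (simp add: image_iff)
  ultimately show ?thesis by simp
qed

lemma bij_betw_image_partitions_of:
  assumes g: "bij_betw g S A"
  shows "bij_betw ((`) ((`) g)) (partitions_of S) (partitions_of A)"
proof (rule bij_betw_byWitness[where f' = "(`) ((`) (inv_into S g))"])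
  have cancel_left: "inv_into S g ` g ` B = B" if "B \<subseteq> S" for B
    using g that by (simp add: bij_betw_def inv_into_image_cancel)
  have cancel_right: "g ` inv_into S g ` B = B" if "B \<subseteq> A" for B
    using g that by (simp add: bij_betw_def image_inv_into_cancel)
  have blocks: "B \<subseteq> X" if "\<sigma> \<in> partitions_of X" "B \<in> \<sigma>" for \<sigma> B X
    using that unfolding partitions_of_def partition_on_def by blast
  show "\<forall>\<sigma>\<in>partitions_of S. (`) (inv_into S g) ` (`) g ` \<sigma> = \<sigma>"
  proof
    fix \<sigma> assume \<sigma>: "\<sigma> \<in> partitions_of S"
    have "inv_into S g ` g ` B = B" if "B \<in> \<sigma>" for B by (rule cancel_left[OF blocks[OF \<sigma> that]])
    then have "(\<lambda>B. inv_into S g ` g ` B) ` \<sigma> = (\<lambda>B. B) ` \<sigma>" by (rule image_cong[OF refl])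
    then show "(`) (inv_into S g) ` (`) g ` \<sigma> = \<sigma>" by (simp only: image_image image_ident)
  qed
  show "\<forall>\<tau>\<in>partitions_of A. (`) g ` (`) (inv_into S g) ` \<tau> = \<tau>"
  proof
    fix \<tau> assume \<tau>: "\<tau> \<in> partitions_of A"
    have "g ` inv_into S g ` B = B" if "B \<in> \<tau>" for B by (rule cancel_right[OF blocks[OF \<tau> that]])
    then have "(\<lambda>B. g ` inv_into S g ` B) ` \<tau> = (\<lambda>B. B) ` \<tau>" by (rule image_cong[OF refl])
    then show "(`) g ` (`) (inv_into S g) ` \<tau> = \<tau>" by (simp only: image_image image_ident)
  qed
  show "(`) ((`) g) ` partitions_of S \<subseteq> partitions_of A"
    using image_partitions_of[OF bij_betw_imp_inj_on[OF g]] bij_betw_imp_surj_on[OF g] by blast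
  have inv: "bij_betw (inv_into S g) A S" by (rule bij_betw_inv_into[OF g])
  show "(`) ((`) (inv_into S g)) ` partitions_of A \<subseteq> partitions_of S"
    using image_partitions_of[OF bij_betw_imp_inj_on[OF inv]] bij_betw_imp_surj_on[OF inv] by auto
qed

lemma cumulant_of_image:
  assumes S: "finite S" and g: "bij_betw g S A" and \<pi>: "\<pi> \<in> partitions_of S"
  shows "cumulant_of F A ((`) g ` \<pi>) = cumulant_of (\<lambda>\<sigma>. F ((`) g ` \<sigma>)) S \<pi>"
proof -
  let ?h = "(`) ((`) g)"
  have bij: "bij_betw ?h (partitions_of S) (partitions_of A)"
    using bij_betw_image_partitions_of[OF g] .
  have order: "refines (?h \<sigma>) (?h \<tau>) \<longleftrightarrow> refines \<sigma> \<tau>"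
    if "\<sigma> \<in> partitions_of S" "\<tau> \<in> partitions_of S" for \<sigma> \<tau>
    using refines_image_iff[OF bij_betw_imp_inj_on[OF g] that] .
  have "refinements A (?h \<pi>) = ?h ` refinements S \<pi>"
  proof
    show "?h ` refinements S \<pi> \<subseteq> refinements A (?h \<pi>)"
      using bij_betw_apply[OF bij] order \<pi> unfolding refinements_def by auto
    show "refinements A (?h \<pi>) \<subseteq> ?h ` refinements S \<pi>"
    proof
      fix \<tau> assume \<tau>: "\<tau> \<in> refinements A (?h \<pi>)"
      then obtain \<sigma> where "\<sigma> \<in> partitions_of S" "\<tau> = ?h \<sigma>"
        using bij unfolding refinements_def bij_betw_def by blast
      with \<tau> show "\<tau> \<in> ?h ` refinements S \<pi>" using order \<pi> unfolding refinements_def by auto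
    qed
  qed
  moreover have "inj_on ?h (refinements S \<pi>)"
    using bij unfolding bij_betw_def refinements_def by (rule inj_on_subset[OF conjunct1]) blast
  moreover have
    "mobius (partitions_of A) refines (?h \<sigma>) (?h \<pi>) = mobius (partitions_of S) refines \<sigma> \<pi>"
    if "\<sigma> \<in> refinements S \<pi>" for \<sigma>
    by (rule mobius_iso[OF bij, symmetric]) (use order that \<pi> in \<open>auto simp: refinements_def\<close>)
  ultimately show ?thesis unfolding cumulant_of_def by (simp add: sum.reindex)
qed

lemma partitions_ofD:
  assumes "\<sigma> \<in> partitions_of S"
  shows "\<Union>\<sigma> = S" and "B \<in> \<sigma> \<Longrightarrow> B \<noteq> {}"
    and "B \<in> \<sigma> \<Longrightarrow> C \<in> \<sigma> \<Longrightarrow> B \<noteq> C \<Longrightarrow> B \<inter> C = {}"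
  using assms unfolding partitions_of_def partition_on_def by (auto dest: disjointD)

definition blocks_within :: "'a set set \<Rightarrow> 'a set set \<Rightarrow> 'a set set" where
  "blocks_within d \<rho> = {B \<in> \<rho>. B \<subseteq> \<Union>d}"

locale block_grouping =
  fixes S :: "'a set" and \<pi> :: "'a set set" and D :: "'a set set set"
  assumes finite_S: "finite S" and partition_pi: "\<pi> \<in> partitions_of S"
    and partition_groups: "partition_on \<pi> D"
begin

lemma group_subset: "d \<in> D \<Longrightarrow> d \<subseteq> \<pi>"
  using partition_groups unfolding partition_on_def by blast

lemma block_in_group: "B \<in> \<pi> \<Longrightarrow> \<exists>d\<in>D. B \<in> d"
  using partition_groups unfolding partition_on_def by blast

lemma group_unique:
  assumes "d \<in> D" "e \<in> D" "x \<in> \<Union>d" "x \<in> \<Union>e"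
  shows "d = e"
proof -
  obtain B C where "B \<in> d" "C \<in> e" "x \<in> B" "x \<in> C" using assms(3,4) by blast
  moreover from this have "B = C" using partitions_ofD(3)[OF partition_pi] group_subset assms(1,2)
    by blast
  ultimately show ?thesis using partition_groups assms(1,2) unfolding partition_on_def
    by (auto dest: disjointD)
qed

lemma finite_Union_group: "d \<in> D \<Longrightarrow> finite (\<Union>d)"
  using group_subset partitions_ofD(1)[OF partition_pi] finite_S
    by (meson Sup_subset_mono rev_finite_subset)

lemma refinement_block_within_group:
  assumes "\<rho> \<in> refinements S \<pi>" "B \<in> \<rho>"
  obtains d where "d \<in> D" "B \<subseteq> \<Union>d"
proof -
  obtain C where "C \<in> \<pi>" "B \<subseteq> C" using assms unfolding refinements_def refines_def by blast
  moreover obtain d where "d \<in> D" "C \<in> d" using block_in_group[OF \<open>C \<in> \<pi>\<close>] by blast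
  ultimately show ?thesis using that by blast
qed

lemma blocks_within_refinements:
  assumes \<rho>: "\<rho> \<in> refinements S \<pi>" and d: "d \<in> D"
  shows "blocks_within d \<rho> \<in> refinements (\<Union>d) d"
proof -
  have \<rho>S: "\<rho> \<in> partitions_of S" using \<rho> unfolding refinements_def by blast
  have "\<Union>d \<subseteq> \<Union>(blocks_within d \<rho>)"
  proof
    fix x assume x: "x \<in> \<Union>d"
    then have "x \<in> \<Union>\<rho>"
      using group_subset[OF d] partitions_ofD(1)[OF partition_pi] partitions_ofD(1)[OF \<rho>S] by blast
    then obtain B where B: "B \<in> \<rho>" "x \<in> B" by blast
    moreover obtain e where "e \<in> D" "B \<subseteq> \<Union>e" using refinement_block_within_group[OF \<rho> B(1)] .
    ultimately show "x \<in> \<Union>(blocks_within d \<rho>)"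
      using group_unique[OF _ d _ x] unfolding blocks_within_def by blast
  qed
  then have "blocks_within d \<rho> \<in> partitions_of (\<Union>d)"
    using partitions_ofD[OF \<rho>S]
    unfolding partitions_of_def partition_on_def blocks_within_def disjoint_def
    by auto
  moreover have "refines (blocks_within d \<rho>) d"
    unfolding refines_def
  proof
    fix B assume B: "B \<in> blocks_within d \<rho>"
    then obtain C where C: "C \<in> \<pi>" "B \<subseteq> C" using \<rho>
      unfolding refinements_def refines_def blocks_within_def by blast
    obtain e where e: "e \<in> D" "C \<in> e" using block_in_group[OF C(1)] by blast
    obtain x where "x \<in> B" using B partitions_ofD(2)[OF \<rho>S] unfolding blocks_within_def by blast
    then have "e = d" using group_unique[OF e(1) d] e(2) C(2) B unfolding blocks_within_def by blast
    then show "\<exists>C\<in>d. B \<subseteq> C" using C e by blast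
  qed
  ultimately show ?thesis unfolding refinements_def by blast
qed

lemma Union_blocks_within: "\<rho> \<in> refinements S \<pi> \<Longrightarrow> (\<Union>d\<in>D. blocks_within d \<rho>) = \<rho>"
  unfolding blocks_within_def by (auto elim: refinement_block_within_group)

lemma blocks_within_self: "d \<in> D \<Longrightarrow> blocks_within d \<pi> = d"
proof
  fix d assume d: "d \<in> D"
  show "d \<subseteq> blocks_within d \<pi>" using group_subset[OF d] unfolding blocks_within_def by blast
  show "blocks_within d \<pi> \<subseteq> d"
  proof
    fix B assume B: "B \<in> blocks_within d \<pi>"
    then obtain e x where "e \<in> D" "B \<in> e" "x \<in> B"
      using block_in_group partitions_ofD(2)[OF partition_pi] unfolding blocks_within_def by blast
    then show "B \<in> d" using group_unique[OF _ d] B unfolding blocks_within_def by blast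
  qed
qed

lemma refines_iff_blocks_within:
  assumes \<rho>: "\<rho> \<in> refinements S \<pi>" and \<rho>': "\<rho>' \<in> refinements S \<pi>"
  shows "refines \<rho> \<rho>' \<longleftrightarrow> (\<forall>d\<in>D. refines (blocks_within d \<rho>) (blocks_within d \<rho>'))"
proof
  assume r: "refines \<rho> \<rho>'"
  show "\<forall>d\<in>D. refines (blocks_within d \<rho>) (blocks_within d \<rho>')"
    unfolding refines_def
  proof (intro ballI)
    fix d B assume d: "d \<in> D" and B: "B \<in> blocks_within d \<rho>"
    then obtain C where C: "C \<in> \<rho>'" "B \<subseteq> C" using r unfolding refines_def blocks_within_def by blast
    obtain e where e: "e \<in> D" "C \<subseteq> \<Union>e" using refinement_block_within_group[OF \<rho>' C(1)] .
    obtain x where "x \<in> B"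
      using B partitions_ofD(2) \<rho> unfolding blocks_within_def refinements_def by blast
    then have "e = d" using group_unique[OF e(1) d] e(2) C(2) B unfolding blocks_within_def by blast
    then show "\<exists>C\<in>blocks_within d \<rho>'. B \<subseteq> C" using C e unfolding blocks_within_def by blast
  qed
next
  assume r: "\<forall>d\<in>D. refines (blocks_within d \<rho>) (blocks_within d \<rho>')"
  show "refines \<rho> \<rho>'"
    unfolding refines_def
  proof
    fix B assume B: "B \<in> \<rho>"
    obtain d where d: "d \<in> D" "B \<subseteq> \<Union>d" using refinement_block_within_group[OF \<rho> B] .
    then have "B \<in> blocks_within d \<rho>" using B unfolding blocks_within_def by blast
    then obtain C where "C \<in> blocks_within d \<rho>'" "B \<subseteq> C" using r d(1) unfolding refines_def by blast
    then show "\<exists>C\<in>\<rho>'. B \<subseteq> C" unfolding blocks_within_def by blast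
  qed
qed

lemma blocks_of_glue:
  assumes "f \<in> (\<Pi>\<^sub>E d\<in>D. refinements (\<Union>d) d)" "d \<in> D" "B \<in> f d"
  shows "B \<subseteq> \<Union>d" and "B \<noteq> {}"
proof -
  have fd: "f d \<in> partitions_of (\<Union>d)" using assms(1,2) unfolding refinements_def by auto
  show "B \<subseteq> \<Union>d" using partitions_ofD(1)[OF fd] assms(3) by blast
  show "B \<noteq> {}" using partitions_ofD(2)[OF fd assms(3)] .
qed

lemma glue_refinements:
  assumes f: "f \<in> (\<Pi>\<^sub>E d\<in>D. refinements (\<Union>d) d)"
  shows "\<Union>(f ` D) \<in> refinements S \<pi>"
proof -
  have fd: "f d \<in> partitions_of (\<Union>d)" "refines (f d) d" if "d \<in> D" for d
    using f that unfolding refinements_def by auto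
  note blk = blocks_of_glue[OF f]
  have "\<Union>(\<Union>(f ` D)) = (\<Union>d\<in>D. \<Union>(f d))" by blast
  also have "\<dots> = (\<Union>d\<in>D. \<Union>d)" using partitions_ofD(1)[OF fd(1)] by simp
  also have "\<dots> = S" using partition_onD1[OF partition_groups] partitions_ofD(1)[OF partition_pi]
    by blast
  finally have "\<Union>(\<Union>(f ` D)) = S" .
  moreover have disj: "disjnt B C" if "B \<in> f d" "C \<in> f e" "d \<in> D" "e \<in> D" "B \<noteq> C" for B C d e
  proof (cases "d = e")
    case True
    then show ?thesis using partitions_ofD(3)[OF fd(1)[OF that(3)]] that unfolding disjnt_def
      by blast
  next
    case False
    show ?thesis unfolding disjnt_def
    proof (rule ccontr)
      assume "B \<inter> C \<noteq> {}"
      then obtain x where "x \<in> B" "x \<in> C" by blast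
      then have "x \<in> \<Union>d" "x \<in> \<Union>e" using blk(1) that(1-4) by blast+
      then show False using group_unique[OF that(3,4)] False by blast
    qed
  qed
  ultimately have "partition_on S (\<Union>(f ` D))"
  proof (intro partition_onI)
    show "disjnt p q" if "p \<in> \<Union>(f ` D)" "q \<in> \<Union>(f ` D)" "p \<noteq> q" for p q
      using that disj by blast
    show "{} \<notin> \<Union>(f ` D)" using blk(2) by blast
  qed
  moreover have "refines (\<Union>(f ` D)) \<pi>"
    using fd(2) group_subset unfolding refines_def by (metis UN_E subsetD)
  ultimately show ?thesis unfolding refinements_def partitions_of_def by blast
qed

lemma blocks_within_glue:
  assumes f: "f \<in> (\<Pi>\<^sub>E d\<in>D. refinements (\<Union>d) d)" and d: "d \<in> D"
  shows "blocks_within d (\<Union>(f ` D)) = f d"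
proof
  show "f d \<subseteq> blocks_within d (\<Union>(f ` D))"
    using blocks_of_glue(1)[OF f d] d unfolding blocks_within_def by blast
  show "blocks_within d (\<Union>(f ` D)) \<subseteq> f d"
  proof
    fix B assume "B \<in> blocks_within d (\<Union>(f ` D))"
    then obtain e where e: "e \<in> D" "B \<in> f e" "B \<subseteq> \<Union>d" unfolding blocks_within_def by blast
    obtain x where "x \<in> B" using blocks_of_glue(2)[OF f e(1,2)] by blast
    then have "e = d" using group_unique[OF e(1) d] blocks_of_glue(1)[OF f e(1,2)] e(3) by blast
    with e show "B \<in> f d" by simp
  qed
qed

lemma bij_betw_glue:
  "bij_betw (\<lambda>f. \<Union>(f ` D)) (\<Pi>\<^sub>E d\<in>D. {\<tau> \<in> refinements (\<Union>d) d. P d \<tau>})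
     {\<rho> \<in> refinements S \<pi>. \<forall>d\<in>D. P d (blocks_within d \<rho>)}"
proof (rule bij_betw_byWitness[where f' = "\<lambda>\<rho>. restrict (\<lambda>d. blocks_within d \<rho>) D"])
  let ?F = "\<Pi>\<^sub>E d\<in>D. {\<tau> \<in> refinements (\<Union>d) d. P d \<tau>}"
  have F: "f \<in> (\<Pi>\<^sub>E d\<in>D. refinements (\<Union>d) d)" if "f \<in> ?F" for f
    using that by auto
  show "\<forall>f\<in>?F. restrict (\<lambda>d. blocks_within d (\<Union>(f ` D))) D = f"
  proof
    fix f assume f: "f \<in> ?F"
    have "restrict (\<lambda>d. blocks_within d (\<Union>(f ` D))) D = restrict f D"
      using blocks_within_glue[OF F[OF f]] by (intro restrict_ext)
    also have "\<dots> = f" using f by (simp add: PiE_restrict)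
    finally show "restrict (\<lambda>d. blocks_within d (\<Union>(f ` D))) D = f" .
  qed
  show "\<forall>\<rho>\<in>{\<rho> \<in> refinements S \<pi>. \<forall>d\<in>D. P d (blocks_within d \<rho>)}.
      \<Union>(restrict (\<lambda>d. blocks_within d \<rho>) D ` D) = \<rho>"
    using Union_blocks_within by simp
  show "(\<lambda>f. \<Union>(f ` D)) ` ?F \<subseteq> {\<rho> \<in> refinements S \<pi>. \<forall>d\<in>D. P d (blocks_within d \<rho>)}"
    using glue_refinements[OF F] blocks_within_glue[OF F] by auto
  show "(\<lambda>\<rho>. restrict (\<lambda>d. blocks_within d \<rho>) D) `
      {\<rho> \<in> refinements S \<pi>. \<forall>d\<in>D. P d (blocks_within d \<rho>)}
      \<subseteq> ?F"
    using blocks_within_refinements by auto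
qed

lemma finite_groups: "finite D"
  using finite_elements[OF finite_elements[OF finite_S] partition_groups] partition_pi
    unfolding partitions_of_def by blast

lemma sum_refinements_prod:
  fixes h :: "'a set set \<Rightarrow> 'a set set \<Rightarrow> 'b::comm_semiring_1"
  shows "(\<Sum>\<rho>\<in>{\<rho> \<in> refinements S \<pi>. \<forall>d\<in>D. P d (blocks_within d \<rho>)}. \<Prod>d\<in>D. h d (blocks_within d \<rho>)) =
   (\<Prod>d\<in>D. \<Sum>\<tau>\<in>{\<tau> \<in> refinements (\<Union>d) d. P d \<tau>}. h d \<tau>)"
  (is "?lhs = ?rhs")
proof -
  have "?lhs = (\<Sum>f\<in>(\<Pi>\<^sub>E d\<in>D. {\<tau> \<in> refinements (\<Union>d) d. P d \<tau>}).
      \<Prod>d\<in>D. h d (blocks_within d (\<Union>(f ` D))))"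
    using sum.reindex_bij_betw[OF bij_betw_glue, symmetric] by blast
  also have "\<dots> = (\<Sum>f\<in>(\<Pi>\<^sub>E d\<in>D. {\<tau> \<in> refinements (\<Union>d) d. P d \<tau>}). \<Prod>d\<in>D. h d (f d))"
  proof (intro sum.cong prod.cong refl)
    fix f d assume f: "f \<in> (\<Pi>\<^sub>E d\<in>D. {\<tau> \<in> refinements (\<Union>d) d. P d \<tau>})" and d: "d \<in> D"
    have "(\<Pi>\<^sub>E d\<in>D. {\<tau> \<in> refinements (\<Union>d) d. P d \<tau>}) \<subseteq> (\<Pi>\<^sub>E d\<in>D. refinements (\<Union>d) d)"
      by (rule PiE_mono) blast
    with f have "f \<in> (\<Pi>\<^sub>E d\<in>D. refinements (\<Union>d) d)" by blast
    then show "h d (blocks_within d (\<Union>(f ` D))) = h d (f d)"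
      using blocks_within_glue[OF _ d] by simp
  qed
  also have "\<dots> = ?rhs"
  proof (rule prod_sum_PiE[where f = h, symmetric])
    show "finite {\<tau> \<in> refinements (\<Union>d) d. P d \<tau>}" if "d \<in> D" for d
      using finitely_many_partition_on[OF finite_Union_group[OF that]]
      unfolding refinements_def partitions_of_def by (rule rev_finite_subset) blast
  qed (rule finite_groups)
  finally show ?thesis .
qed

lemma order_interval_refinements:
  assumes \<sigma>: "\<sigma> \<in> refinements S \<pi>" and \<rho>': "\<rho>' \<in> refinements S \<pi>"
  shows "order_interval (partitions_of S) refines \<sigma> \<rho>' = {\<rho> \<in> refinements S \<pi>. \<forall>d\<in>D.
      blocks_within d \<rho> \<in> order_interval (partitions_of (\<Union>d)) refines
        (blocks_within d \<sigma>) (blocks_within d \<rho>')}"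
proof -
  have "\<rho> \<in> refinements S \<pi>" if "\<rho> \<in> order_interval (partitions_of S) refines \<sigma> \<rho>'" for \<rho>
    using that \<rho>' transpD[OF transp_refines] unfolding refinements_def order_interval_def by blast
  moreover have "\<rho> \<in> order_interval (partitions_of S) refines \<sigma> \<rho>' \<longleftrightarrow> (\<forall>d\<in>D.
      blocks_within d \<rho> \<in> order_interval (partitions_of (\<Union>d)) refines
        (blocks_within d \<sigma>) (blocks_within d \<rho>'))"
    if \<rho>: "\<rho> \<in> refinements S \<pi>" for \<rho>
    using refines_iff_blocks_within[OF \<sigma> \<rho>] refines_iff_blocks_within[OF \<rho> \<rho>'] \<rho>
      blocks_within_refinements[OF \<rho>] unfolding order_interval_def refinements_def by auto
  ultimately show ?thesis by blast
qed

lemma refinements_eqI: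
  assumes "\<sigma> \<in> refinements S \<pi>" "\<rho> \<in> refinements S \<pi>"
    and "\<And>d. d \<in> D \<Longrightarrow> blocks_within d \<sigma> = blocks_within d \<rho>"
  shows "\<sigma> = \<rho>"
proof -
  have "\<sigma> = (\<Union>d\<in>D. blocks_within d \<sigma>)" using Union_blocks_within[OF assms(1)] by simp
  also have "\<dots> = (\<Union>d\<in>D. blocks_within d \<rho>)" using assms(3) by (rule SUP_cong[OF refl])
  also have "\<dots> = \<rho>" by (rule Union_blocks_within[OF assms(2)])
  finally show ?thesis .
qed

lemma sum_mobius_blocks_within:
  assumes \<sigma>: "\<sigma> \<in> refinements S \<pi>" and \<rho>': "\<rho>' \<in> refinements S \<pi>" "refines \<sigma> \<rho>'"
  shows "(\<Sum>\<rho>\<in>order_interval (partitions_of S) refines \<sigma> \<rho>'.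
      \<Prod>d\<in>D. mobius (partitions_of (\<Union>d)) refines (blocks_within d \<sigma>) (blocks_within d \<rho>)) =
    (if \<sigma> = \<rho>' then 1 else 0)"
proof -
  let ?\<mu> = "\<lambda>d. mobius (partitions_of (\<Union>d)) refines"
  let ?I = "\<lambda>d. order_interval (partitions_of (\<Union>d)) refines
    (blocks_within d \<sigma>) (blocks_within d \<rho>')"
  have I: "{\<tau> \<in> refinements (\<Union>d) d. \<tau> \<in> ?I d} = ?I d" if "d \<in> D" for d
    using blocks_within_refinements[OF \<rho>'(1) that] transpD[OF transp_refines]
    unfolding order_interval_def refinements_def by blast
  have "(\<Sum>\<rho>\<in>order_interval (partitions_of S) refines \<sigma> \<rho>'.
        \<Prod>d\<in>D. ?\<mu> d (blocks_within d \<sigma>) (blocks_within d \<rho>))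
      = (\<Prod>d\<in>D. \<Sum>\<tau>\<in>?I d. ?\<mu> d (blocks_within d \<sigma>) \<tau>)"
    unfolding order_interval_refinements[OF \<sigma> \<rho>'(1)]
      sum_refinements_prod[where P = "\<lambda>d \<tau>. \<tau> \<in> ?I d" and h = "\<lambda>d \<tau>. ?\<mu> d (blocks_within d \<sigma>) \<tau>"]
    using I by simp
  also have "\<dots> = (\<Prod>d\<in>D. if blocks_within d \<sigma> = blocks_within d \<rho>' then 1 else 0)"
    using finite_poset.mobius_interval_sum[OF finite_poset_partitions_of[OF finite_Union_group]]
      blocks_within_refinements[OF \<sigma>] blocks_within_refinements[OF \<rho>'(1)]
      refines_iff_blocks_within[OF \<sigma> \<rho>'(1)] \<rho>'(2)
    unfolding refinements_def by (intro prod.cong refl) auto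
  also have "\<dots> = (if \<sigma> = \<rho>' then 1 else 0)"
    using refinements_eqI[OF \<sigma> \<rho>'(1)] finite_groups by (auto simp: prod_zero)
  finally show ?thesis .
qed

lemma mobius_refinements_prod:
  assumes \<sigma>: "\<sigma> \<in> refinements S \<pi>"
  shows "mobius (partitions_of S) refines \<sigma> \<pi> =
    (\<Prod>d\<in>D. mobius (partitions_of (\<Union>d)) refines (blocks_within d \<sigma>) d)"
proof -
  interpret finite_poset "partitions_of S" refines using finite_poset_partitions_of[OF finite_S] .
  let ?g = "\<lambda>\<rho>. \<Prod>d\<in>D. mobius (partitions_of (\<Union>d)) refines (blocks_within d \<sigma>) (blocks_within d \<rho>)"
  have "?g \<pi> = mobius (partitions_of S) refines \<sigma> \<pi>"
  proof (rule mobius_unique)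
    show "(\<Sum>\<rho>\<in>order_interval (partitions_of S) refines \<sigma> \<rho>'. ?g \<rho>) = (if \<sigma> = \<rho>' then 1 else 0)"
      if "\<rho>' \<in> partitions_of S" "refines \<sigma> \<rho>'" "refines \<rho>' \<pi>" for \<rho>'
      using sum_mobius_blocks_within[OF \<sigma>] that unfolding refinements_def by blast
  qed (use \<sigma> partition_pi reflpD[OF reflp_refines] in \<open>auto simp: refinements_def\<close>)
  then show ?thesis using blocks_within_self by simp
qed

lemma cumulant_of_prod:
  assumes F: "\<And>\<rho>. \<rho> \<in> refinements S \<pi> \<Longrightarrow> F \<rho> = (\<Prod>d\<in>D. F (blocks_within d \<rho>))"
  shows "cumulant_of F S \<pi> = (\<Prod>d\<in>D. cumulant_of F (\<Union>d) d)"
proof -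
  have "cumulant_of F S \<pi> = (\<Sum>\<rho>\<in>{\<rho> \<in> refinements S \<pi>. \<forall>d\<in>D. True}. \<Prod>d\<in>D.
      F (blocks_within d \<rho>) * of_int (mobius (partitions_of (\<Union>d)) refines (blocks_within d \<rho>) d))"
    unfolding cumulant_of_def using F mobius_refinements_prod
    by (intro sum.cong) (simp_all add: prod.distrib)
  also have "\<dots> = (\<Prod>d\<in>D. cumulant_of F (\<Union>d) d)"
    unfolding cumulant_of_def using sum_refinements_prod[where P = "\<lambda>_ _. True"
      and h = "\<lambda>d \<tau>. F \<tau> * of_int (mobius (partitions_of (\<Union>d)) refines \<tau> d)"] by simp
  finally show ?thesis .
qed

end

lemma block_grouping_components:
  assumes "finite_partition \<pi>"
  shows "block_grouping (\<Union>\<pi>) \<pi> (components \<pi>)"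
proof
  show "finite (\<Union>\<pi>)" using assms finite_partition_iff_partition_on by blast
  show "\<pi> \<in> partitions_of (\<Union>\<pi>)" by (rule partitions_of_Union[OF assms])
  show "partition_on \<pi> (components \<pi>)" by (rule partition_on_components)
qed

lemma noncrossing_grouping_blocks_within:
  assumes fp: "finite_partition \<pi>" and \<rho>: "\<rho> \<in> refinements (\<Union>\<pi>) \<pi>"
  shows "noncrossing_grouping \<rho> (components \<pi>) (\<lambda>c. blocks_within c \<rho>)"
proof -
  interpret block_grouping "\<Union>\<pi>" \<pi> "components \<pi>" using block_grouping_components[OF fp] .
  have \<rho>S: "\<rho> \<in> partitions_of (\<Union>\<pi>)" using \<rho> unfolding refinements_def by blast
  have "disjoint_family_on (\<lambda>c. blocks_within c \<rho>) (components \<pi>)"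
    unfolding disjoint_family_on_def
  proof (intro ballI impI)
    fix c c' assume c: "c \<in> components \<pi>" "c' \<in> components \<pi>" "c \<noteq> c'"
    show "blocks_within c \<rho> \<inter> blocks_within c' \<rho> = {}"
    proof (rule ccontr)
      assume "blocks_within c \<rho> \<inter> blocks_within c' \<rho> \<noteq> {}"
      then obtain B x where "B \<in> \<rho>" "B \<subseteq> \<Union>c" "B \<subseteq> \<Union>c'" "x \<in> B"
        using partitions_ofD(2)[OF \<rho>S] unfolding blocks_within_def by blast
      then show False using group_unique[OF c(1,2)] c(3) by blast
    qed
  qed
  moreover have "\<not> crosses B B'"
    if c: "c \<in> components \<pi>" "c' \<in> components \<pi>" "c \<noteq> c'"
      and B: "B \<in> blocks_within c \<rho>" "B' \<in> blocks_within c' \<rho>" for c c' B B'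
  proof
    assume cross: "crosses B B'"
    obtain C C' where C: "C \<in> c" "B \<subseteq> C" "C' \<in> c'" "B' \<subseteq> C'"
      using blocks_within_refinements[OF \<rho> c(1)] blocks_within_refinements[OF \<rho> c(2)] B
      unfolding refinements_def refines_def by blast
    then have "C \<noteq> C'" using components_unique c by blast
    then show False using crosses_mono[OF cross C(2,4)] components_not_crossing c C(1,3) by blast
  qed
  ultimately show ?thesis
    unfolding noncrossing_grouping_def using Union_blocks_within[OF \<rho>]
    by (auto simp: blocks_within_def)
qed

section \<open>Moments and cumulants under pyramidal independence\<close>

locale pyramidal_exchangeable =
  fixes scA :: "complex \<Rightarrow> 'a::ring_1 \<Rightarrow> 'a" and phi :: "'a \<Rightarrow> complex"
    and scU :: "complex \<Rightarrow> 'u::ring_1 \<Rightarrow> 'u" and phiU :: "'u \<Rightarrow> complex"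
    and iota :: "nat \<Rightarrow> 'a \<Rightarrow> 'u"
  assumes exchangeable: "exchangeability_system scA phi scU phiU iota"
    and pyramidal: "pyramidal_independence scU phiU iota"
begin

definition block_word :: "nat set set \<Rightarrow> (nat set \<Rightarrow> nat) \<Rightarrow> (nat \<Rightarrow> 'a) \<Rightarrow> nat list \<Rightarrow> 'u" where
  "block_word \<sigma> l X js = prod_list (map (\<lambda>j. iota (l (block_of \<sigma> j)) (X j)) js)"

text \<open>\<phi>_\<sigma> for a partition \<sigma> of an arbitrary finite set of positions, read in place rather than
  transported to an initial segment.\<close>
definition moment :: "nat set set \<Rightarrow> (nat \<Rightarrow> 'a) \<Rightarrow> complex" where
  "moment \<sigma> X = phiU (block_word \<sigma> Min X (sorted_list_of_set (\<Union>\<sigma>)))"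

lemma block_word_append:
  "block_word \<sigma> l X (js @ ks) = block_word \<sigma> l X js * block_word \<sigma> l X ks"
  unfolding block_word_def by simp

lemma block_word_cong:
  "(\<And>j. j \<in> set js \<Longrightarrow> l (block_of \<sigma> j) = l' (block_of \<tau> j)) \<Longrightarrow>
    block_word \<sigma> l X js = block_word \<tau> l' X js"
  unfolding block_word_def by (intro arg_cong[where f = prod_list] map_cong) auto

lemma block_word_in_alg_I:
  "(\<And>j. j \<in> set js \<Longrightarrow> l (block_of \<sigma> j) \<in> I) \<Longrightarrow> block_word \<sigma> l X js \<in> alg_I scU iota I"
proof (induction js)
  case Nil
  then show ?case unfolding block_word_def alg_I_def by (simp add: gen_subalg.one)
next
  case (Cons j js)
  have "iota (l (block_of \<sigma> j)) (X j) \<in> alg_I scU iota I"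
    using Cons.prems unfolding alg_I_def by (auto intro: gen_subalg.gen)
  with Cons show ?case unfolding block_word_def alg_I_def by (auto intro: gen_subalg.mult)
qed

lemma phiU_mixed_word_bij:
  "length idx = length Ys \<Longrightarrow> bij \<tau> \<Longrightarrow>
    phiU (mixed_word iota (map \<tau> idx) Ys) = phiU (mixed_word iota idx Ys)"
  using exchangeable unfolding exchangeability_system_def by metis

lemma block_word_eq_mixed_word:
  "block_word \<sigma> l X js = mixed_word iota (map (\<lambda>j. l (block_of \<sigma> j)) js) (map X js)"
  unfolding block_word_def mixed_word_def by (induction js) auto

lemma phiU_block_word_relabel:
  assumes \<sigma>: "finite_partition \<sigma>" and l: "inj_on l \<sigma>" "inj_on l' \<sigma>" and js: "set js \<subseteq> \<Union>\<sigma>"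
  shows "phiU (block_word \<sigma> l X js) = phiU (block_word \<sigma> l' X js)"
proof -
  have fin: "finite \<sigma>" and disj: "disjoint \<sigma>" using \<sigma> unfolding finite_partition_def by blast+
  obtain \<tau> where \<tau>: "bij \<tau>" "\<forall>B\<in>\<sigma>. \<tau> (l B) = l' B"
    using ex_bij_extends_relabelling fin l by blast
  have "block_of \<sigma> j \<in> \<sigma>" if "j \<in> set js" for j
    by (rule block_of_in(1)[OF disj]) (use js that in blast)
  then have relabel: "map \<tau> (map (\<lambda>j. l (block_of \<sigma> j)) js) = map (\<lambda>j. l' (block_of \<sigma> j)) js"
    using \<tau>(2) by auto
  have "phiU (block_word \<sigma> l X js) =
      phiU (mixed_word iota (map \<tau> (map (\<lambda>j. l (block_of \<sigma> j)) js)) (map X js))"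
    unfolding block_word_eq_mixed_word by (rule phiU_mixed_word_bij[symmetric]) (simp_all add: \<tau>(1))
  also have "\<dots> = phiU (block_word \<sigma> l' X js)"
    unfolding block_word_eq_mixed_word relabel ..
  finally show ?thesis .
qed

lemma phiU_one: "phiU 1 = 1"
  using exchangeable unfolding exchangeability_system_def nc_prob_space_def by auto

lemma moment_empty: "moment {} X = 1"
  by (simp add: moment_def block_word_def phiU_one)

lemma phiU_factor_middle:
  assumes "I \<inter> J = {}" "X \<in> alg_I scU iota I" "X' \<in> alg_I scU iota I" "Y \<in> alg_I scU iota J"
  shows "phiU (X * Y * X') = phiU (X * X') * phiU Y"
  using pyramidal assms unfolding pyramidal_independence_def by blast

text \<open>By convexity the letters of T form a contiguous middle factor of the word; their labels differ
  from all other labels, so pyramidal independence splits them off.\<close>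
lemma moment_split:
  assumes \<sigma>: "finite_partition \<sigma>" and T: "T \<subseteq> \<sigma>" "T \<noteq> {}" and convex: "convex_in (\<Union>\<sigma>) (\<Union>T)"
  shows "moment \<sigma> X = moment T X * moment (\<sigma> - T) X"
proof -
  have disj: "disjoint \<sigma>" using \<sigma> unfolding finite_partition_def by blast
  have rest: "\<Union>(\<sigma> - T) = \<Union>\<sigma> - \<Union>T"
    using T disj by (auto dest: disjointD)
  have fin: "finite (\<Union>\<sigma>)" and sub: "\<Union>T \<subseteq> \<Union>\<sigma>" "\<Union>T \<noteq> {}"
    using \<sigma> T unfolding finite_partition_def by auto
  obtain L R where LR: "sorted_list_of_set (\<Union>\<sigma>) = L @ sorted_list_of_set (\<Union>T) @ R"
    "sorted_list_of_set (\<Union>\<sigma> - \<Union>T) = L @ R"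
    using sorted_list_of_set_convex_split[OF fin sub convex] by blast
  have LR_rest: "set L \<union> set R = \<Union>(\<sigma> - T)"
    using arg_cong[OF LR(2), of set] rest fin by simp
  have fT: "finite (\<Union>T)" using fin sub(1) by (rule rev_finite_subset)
  let ?w = "block_word (\<sigma> - T) Min X" and ?M = "block_word T Min X (sorted_list_of_set (\<Union>T))"
  have L: "j \<in> \<Union>(\<sigma> - T)" if "j \<in> set L" for j using LR_rest that by blast
  have R: "j \<in> \<Union>(\<sigma> - T)" if "j \<in> set R" for j using LR_rest that by blast
  have "block_word \<sigma> Min X L = ?w L" "block_word \<sigma> Min X R = ?w R"
    using block_of_subset[OF disj Diff_subset L] block_of_subset[OF disj Diff_subset R]
    by (auto intro!: block_word_cong)
  moreover have "block_word \<sigma> Min X (sorted_list_of_set (\<Union>T)) = ?M"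
    using fT block_of_subset[OF disj T(1)] by (auto intro!: block_word_cong)
  ultimately have word: "block_word \<sigma> Min X (sorted_list_of_set (\<Union>\<sigma>)) = ?w L * ?M * ?w R"
    unfolding LR block_word_append by (simp add: mult.assoc)
  have "?w L \<in> alg_I scU iota (Min ` (\<sigma> - T))" "?w R \<in> alg_I scU iota (Min ` (\<sigma> - T))"
    using L R block_of_in(1)[OF pairwise_subset[OF disj Diff_subset]]
    by (auto intro!: block_word_in_alg_I)
  moreover have "?M \<in> alg_I scU iota (Min ` T)"
    using fT block_of_in(1)[OF pairwise_subset[OF disj T(1)]] by (auto intro!: block_word_in_alg_I)
  moreover have "Min ` (\<sigma> - T) \<inter> Min ` T = {}"
    using inj_on_Min_blocks[OF \<sigma>] T(1) by (auto simp: inj_on_def)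
  ultimately have "moment \<sigma> X = phiU (?w L * ?w R) * phiU ?M"
    unfolding moment_def word by (intro phiU_factor_middle)
  also have "phiU (?w L * ?w R) = moment (\<sigma> - T) X"
    unfolding moment_def rest LR block_word_append ..
  finally show ?thesis unfolding moment_def by (simp add: mult.commute)
qed

lemma moment_noncrossing_grouping:
  assumes "finite_partition \<sigma>" "finite A" "noncrossing_grouping \<sigma> A G"
  shows "moment \<sigma> X = (\<Prod>a\<in>A. moment (G a) X)"
  using assms
proof (induction "card \<sigma>" arbitrary: \<sigma> G rule: less_induct)
  case less
  note \<sigma> = less.prems(1) and G = less.prems(3)
  show ?case
  proof (cases "\<sigma> = {}")
    case True
    then show ?thesis using G by (simp add: moment_empty noncrossing_grouping_def)
  next
    case False
    obtain c where c: "c \<in> components \<sigma>" "convex_in (\<Union>\<sigma>) (\<Union>c)"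
      using ex_convex_component[OF \<sigma> False] .
    obtain B0 where B0: "B0 \<in> \<sigma>" "c = component_of \<sigma> B0" using c(1) components_eq by auto
    obtain a0 where a0: "a0 \<in> A" "B0 \<in> G a0" using B0(1) G unfolding noncrossing_grouping_def
      by blast
    have c_sub: "c \<subseteq> G a0" unfolding B0(2) by (rule component_of_subset_group[OF G a0])
    have c_ne: "c \<noteq> {}" using B0 component_of_self by blast
    have Ga0: "G a0 \<subseteq> \<sigma>" using G a0(1) unfolding noncrossing_grouping_def by blast
    have "moment \<sigma> X = moment c X * moment (\<sigma> - c) X"
      using moment_split[OF \<sigma> components_subset[OF c(1)] c_ne c(2)] .
    moreover have "moment (G a0) X = moment c X * moment (G a0 - c) X"
      using moment_split[OF finite_partition_subset[OF \<sigma> Ga0] c_sub c_ne]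
        convex_in_subset[OF c(2)] Ga0 by blast
    moreover have "card (\<sigma> - c) < card \<sigma>"
      using \<sigma> components_subset[OF c(1)] c_ne unfolding finite_partition_def
      by (intro psubset_card_mono) auto
    then have "moment (\<sigma> - c) X = (\<Prod>a\<in>A. moment ((G(a0 := G a0 - c)) a) X)"
      using less.hyps finite_partition_subset[OF \<sigma>] less.prems(2)
        noncrossing_grouping_remove[OF G a0(1) c_sub] by blast
    ultimately show ?thesis
      using less.prems(2) a0(1) by (simp add: prod.remove mult.assoc)
  qed
qed

lemma moment_components:
  "finite_partition \<sigma> \<Longrightarrow> moment \<sigma> X = (\<Prod>c\<in>components \<sigma>. moment c X)"
  using moment_noncrossing_grouping[OF _ _ noncrossing_grouping_components] finite_components
  unfolding finite_partition_def by blast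

lemma phi_part_eq_block_word:
  "phi_part phiU iota \<tau> Ys = phiU (block_word \<tau> Min ((!) Ys) [0..<length Ys])"
  unfolding phi_part_def block_word_eq_mixed_word by (simp add: map_nth)

text \<open>The transported partition carries other labels than the blocks' minima; exchangeability
  makes the labels irrelevant.\<close>
lemma phi_sub_eq_moment:
  assumes c: "finite_partition c"
  shows "phi_sub phiU iota c Xs = moment c ((!) Xs)"
proof -
  let ?S = "\<Union>c" let ?s = "sorted_list_of_set ?S" and ?r = "rank_in ?S"
  let ?Ys = "sub_list c Xs"
  have fin: "finite ?S" using c finite_partition_iff_partition_on by blast
  have inj: "inj_on ?r ?S" using bij_betw_rank_in[OF fin] bij_betw_imp_inj_on by blast
  have disj: "disjoint c" using c unfolding finite_partition_def by blast
  have "[0..<length ?Ys] = map ?r ?s"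
    using map_rank_in[OF fin] by (simp add: sub_list_def)
  then have "phi_sub phiU iota c Xs = phiU (block_word ((`) ?r ` c) Min ((!) ?Ys) (map ?r ?s))"
    unfolding phi_sub_def transport_part_eq_image[OF fin] phi_part_eq_block_word by simp
  also have "block_word ((`) ?r ` c) Min ((!) ?Ys) (map ?r ?s) =
      block_word c (\<lambda>B. Min (?r ` B)) ((!) Xs) ?s"
  proof -
    have "Min (block_of ((`) ?r ` c) (?r j)) = Min (?r ` block_of c j) \<and> ?Ys ! ?r j = Xs ! j"
      if "j \<in> set ?s" for j
    proof -
      have j: "j \<in> ?S" using that fin by simp
      have "?r j \<in> {..<card ?S}" by (rule bij_betw_apply[OF bij_betw_rank_in[OF fin] j])
      then have "?r j < length ?s" by simp
      then show ?thesis using block_of_image[OF inj disj j] nth_rank_in[OF fin j]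
        by (simp add: sub_list_def)
    qed
    then show ?thesis unfolding block_word_def map_map comp_def
      by (intro arg_cong[where f = prod_list] map_cong) simp_all
  qed
  also have "phiU \<dots> = phiU (block_word c Min ((!) Xs) ?s)"
  proof (rule phiU_block_word_relabel[OF c _ inj_on_Min_blocks[OF c]])
    have "inj_on ((`) ?r) c" using inj_on_image_Pow[OF inj] by (rule inj_on_subset) blast
    moreover have "inj_on Min ((`) ?r ` c)"
      using inj_on_Min_blocks[OF finite_partition_image[OF c inj]] .
    ultimately show "inj_on (\<lambda>B. Min (?r ` B)) c" using comp_inj_on by (fastforce simp: comp_def)
  qed (use fin in simp)
  finally show ?thesis unfolding moment_def .
qed

lemma K_sub_eq_cumulant_of:
  assumes c: "finite_partition c"
  shows "K_sub phiU iota c Xs = cumulant_of (\<lambda>\<sigma>. moment \<sigma> ((!) Xs)) (\<Union>c) c"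
proof -
  let ?S = "\<Union>c" and ?Ys = "sub_list c Xs"
  let ?r = "rank_in ?S"
  have fin: "finite ?S" using c finite_partition_iff_partition_on by blast
  have r: "bij_betw ?r ?S {0..<length ?Ys}"
    using bij_betw_rank_in[OF fin] by (simp add: sub_list_def atLeast0LessThan)
  have "K_sub phiU iota c Xs =
      cumulant_of (\<lambda>\<sigma>. phi_part phiU iota \<sigma> ?Ys) {0..<length ?Ys} ((`) ?r ` c)"
    unfolding K_sub_def K_part_eq_cumulant_of transport_part_eq_image[OF fin] ..
  also have "\<dots> = cumulant_of (\<lambda>\<sigma>. phi_part phiU iota ((`) ?r ` \<sigma>) ?Ys) ?S c"
    by (rule cumulant_of_image[OF fin r partitions_of_Union[OF c]])
  also have "\<dots> = cumulant_of (\<lambda>\<sigma>. moment \<sigma> ((!) Xs)) ?S c"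
  proof (rule cumulant_of_cong)
    fix \<sigma> assume "\<sigma> \<in> refinements ?S c"
    then have \<sigma>: "\<sigma> \<in> partitions_of ?S" unfolding refinements_def by blast
    have "\<Union>\<sigma> = ?S" by (rule partitions_ofD(1)[OF \<sigma>])
    then have "transport_part \<sigma> = (`) ?r ` \<sigma>" "sub_list \<sigma> Xs = ?Ys"
      using transport_part_eq_image[of \<sigma>] fin unfolding sub_list_def by simp_all
    then have "phi_part phiU iota ((`) ?r ` \<sigma>) ?Ys = phi_sub phiU iota \<sigma> Xs"
      unfolding phi_sub_def by simp
    then show "phi_part phiU iota ((`) ?r ` \<sigma>) ?Ys = moment \<sigma> ((!) Xs)"
      using phi_sub_eq_moment[OF finite_partition_if_partitions_of[OF fin \<sigma>]] by simp
  qed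
  finally show ?thesis .
qed

lemma cumulant_of_moment_components:
  assumes \<pi>: "finite_partition \<pi>"
  shows "cumulant_of (\<lambda>\<sigma>. moment \<sigma> X) (\<Union>\<pi>) \<pi> =
    (\<Prod>c\<in>components \<pi>. cumulant_of (\<lambda>\<sigma>. moment \<sigma> X) (\<Union>c) c)"
proof -
  interpret block_grouping "\<Union>\<pi>" \<pi> "components \<pi>" using block_grouping_components[OF \<pi>] .
  show ?thesis
  proof (rule cumulant_of_prod)
    fix \<rho> assume \<rho>: "\<rho> \<in> refinements (\<Union>\<pi>) \<pi>"
    then have "finite_partition \<rho>"
      using finite_partition_if_partitions_of finite_S unfolding refinements_def by blast
    then show "moment \<rho> X = (\<Prod>c\<in>components \<pi>. moment (blocks_within c \<rho>) X)"
      using moment_noncrossing_grouping finite_groups noncrossing_grouping_blocks_within[OF \<pi> \<rho>]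
      by blast
  qed
qed

end

theorem proposition3p11:
  fixes scA :: "complex \<Rightarrow> 'a::ring_1 \<Rightarrow> 'a" and phi :: "'a \<Rightarrow> complex"
    and scU :: "complex \<Rightarrow> 'u::ring_1 \<Rightarrow> 'u" and phiU :: "'u \<Rightarrow> complex"
    and iota :: "nat \<Rightarrow> 'a \<Rightarrow> 'u"
    and Xs :: "'a list" and \<pi> :: "nat set set"
  assumes "exchangeability_system scA phi scU phiU iota"
    and "pyramidal_independence scU phiU iota"
    and "\<pi> \<in> set_partitions (length Xs)"
  shows "phi_part phiU iota \<pi> Xs = (\<Prod>c\<in>components \<pi>. phi_sub phiU iota c Xs) \<and>
         K_part phiU iota \<pi> Xs = (\<Prod>c\<in>components \<pi>. K_sub phiU iota c Xs)"
proof -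
  interpret pyramidal_exchangeable scA phi scU phiU iota
    using assms(1,2) by unfold_locales
  have U: "\<Union>\<pi> = {0..<length Xs}" and \<pi>: "finite_partition \<pi>"
    using assms(3) unfolding set_partitions_def finite_partition_iff_partition_on
    by (auto simp: partition_on_def)
  have c: "finite_partition c" if "c \<in> components \<pi>" for c
    using finite_partition_subset[OF \<pi> components_subset[OF that]] .
  have "phi_part phiU iota \<pi> Xs = moment \<pi> ((!) Xs)"
    by (simp add: phi_sub_eq_moment[OF \<pi>] flip: phi_sub_eq_phi_part[OF U])
  also have "\<dots> = (\<Prod>c\<in>components \<pi>. phi_sub phiU iota c Xs)"
    by (simp add: moment_components[OF \<pi>] phi_sub_eq_moment[OF c])
  moreover have "K_part phiU iota \<pi> Xs = cumulant_of (\<lambda>\<sigma>. moment \<sigma> ((!) Xs)) (\<Union>\<pi>) \<pi>"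
    by (simp add: K_sub_eq_cumulant_of[OF \<pi>] flip: K_sub_eq_K_part[OF U])
  moreover have "\<dots> = (\<Prod>c\<in>components \<pi>. K_sub phiU iota c Xs)"
    by (simp add: cumulant_of_moment_components[OF \<pi>] K_sub_eq_cumulant_of[OF c])
  ultimately show ?thesis by simp
qed

end
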